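(* Let $C_{\vec B}$ and $C_{\vec C}$ be Cantor sets with scale factors $M$ and $N$ respectively, and suppose $M$ and $N$ are multiplicatively independent. Then $\mu_{\vec B}(C_{\vec B}\cap C_{\vec C})=0$ and $\mu_{\vec C}(C_{\vec B}\cap C_{\vec C})=0$.
   Context: A Cantor set is specified by an integer scale factor $N\ge 3$ and a digit set $D\subset\{0,1,\dots,N-1\}$ with $2\le |D|\le N-1$; equivalently by its binary digit vector $\vec B=(b_0,\dots,b_{N-1})\in\{0,1\}^N$ with $b_i=1$ iff $i\in D$, and $\|\vec B\|:=\sum_i b_i$. With $\phi_d(x)=(x+d)/N$ for $d\in D$, the Cantor set $C_{\vec B}\subset[0,1]$ is the unique nonempty compact set with $C_{\vec B}=\bigcup_{d\in D}\phi_d(C_{\vec B})$, and $\mu_{\vec B}$ is the unique Borel probability measure with $\mu_{\vec B}=\frac{1}{\|\vec B\|}\sum_{d\in D}\mu_{\vec B}\circ\phi_d^{-1}$ (supported on $C_{\vec B}$). Two integers $r,s$ are multiplicatively dependent if there exist integers $m,n$, not both zero, with $r^m=s^n$; otherwise they are multiplicatively independent. *)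

theory Defs
  imports "HOL-Probability.Probability"
begin

text \<open>Admissible Cantor data: scale factor N \<ge> 3 and digit set D \<subseteq> {0,...,N-1}
  with 2 \<le> |D| \<le> N-1.  (D is the set of indices i with b_i = 1 in the digit vector.)\<close>
definition cantor_data :: "nat \<Rightarrow> nat set \<Rightarrow> bool" where
  "cantor_data N D \<longleftrightarrow> N \<ge> 3 \<and> D \<subseteq> {0..<N} \<and> 2 \<le> card D \<and> card D \<le> N - 1"

definition cmap :: "nat \<Rightarrow> nat \<Rightarrow> real \<Rightarrow> real" where
  "cmap N d x = (x + real d) / real N"

definition cantor_set :: "nat \<Rightarrow> nat set \<Rightarrow> real set" where
  "cantor_set N D = (THE K. K \<noteq> {} \<and> compact K \<and> K = (\<Union>d\<in>D. cmap N d ` K))"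

definition cantor_measure :: "nat \<Rightarrow> nat set \<Rightarrow> real measure" where
  "cantor_measure N D = (THE \<mu>. sets \<mu> = sets borel \<and> prob_space \<mu> \<and>
     (\<forall>A\<in>sets borel. measure \<mu> A =
        (\<Sum>d\<in>D. measure \<mu> (cmap N d -` A \<inter> space \<mu>)) / real (card D)))"

definition mult_dependent :: "int \<Rightarrow> int \<Rightarrow> bool" where
  "mult_dependent r s \<longleftrightarrow>
     (\<exists>m n :: int. (m \<noteq> 0 \<or> n \<noteq> 0) \<and> (of_int r :: real) powi m = (of_int s :: real) powi n)"

definition mult_independent :: "int \<Rightarrow> int \<Rightarrow> bool" where
  "mult_independent r s \<longleftrightarrow> \<not> mult_dependent r s"

end

theory Submission
  imports Defs
begin

(* Let nu be the self-similar measure of C_B (scale M) and Z = C_C (scale N).  If j0 is a digit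
   missing from C, then for every x in Z and every k, N^k x stays at distance at least 1/(2N)
   from y = (2 j0 + 1)/(2N) modulo 1.  Hence, for a suitable degree L, the trigonometric polynomial

     A(x) = 1/n * sum_{j<n} ((2 + 2 cos (2 pi (N^(kappa j) x - y)))^L - binomial (2L) L),

   whose frequencies are h N^(kappa j) with 0 < |h| <= L, satisfies |A| >= eta > 0 on Z, and
   eta^2 nu(Z) <= integral |A|^2 d nu.  Expanding the square, this integral is at most O(1/n) from
   the terms with equal j plus the Fourier transform of nu at the differences
   h N^(kappa j) - h' N^(kappa j').  That transform is the product of the masks m_B(t / M^i), and a
   mask is at most rho < 1 whenever (b1 - b0) t / M^i is far from the integers, i.e. at every
   "good" base-M digit of t.  As log_M N is irrational, Kronecker's theorem makes N^k / M^j close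
   to the lacunary number 1 + sum_{t<=T} M^(-tD), which gives T good digits simultaneously in all the
   differences; choosing the exponents kappa j one at a time, the integral is at most
   O(1/n) + O(rho^T).  Letting n, T go to infinity gives nu(Z) = 0. *)

section \<open>The Cantor set as the attractor of its digit maps\<close>

lemma cantor_dataD:
  assumes "cantor_data N D"
  shows "N \<ge> 3" "D \<subseteq> {0..<N}" "finite D" "D \<noteq> {}" "card D \<ge> 2" "card D \<le> N - 1"
  using assms finite_subset[of D "{0..<N}"] unfolding cantor_data_def by auto

definition hutchinson :: "nat \<Rightarrow> nat set \<Rightarrow> real set \<Rightarrow> real set" where
  "hutchinson N D S = (\<Union>d\<in>D. cmap N d ` S)"

lemma hutchinson_mono: "S \<subseteq> T \<Longrightarrow> hutchinson N D S \<subseteq> hutchinson N D T"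
  unfolding hutchinson_def by blast

lemma hutchinson_unit_interval:
  assumes "D \<subseteq> {0..<N}" shows "hutchinson N D {0..1} \<subseteq> {0..1}"
proof
  fix x assume "x \<in> hutchinson N D {0..1}"
  then obtain d y where d: "d \<in> D" and y: "0 \<le> y" "y \<le> 1" and x: "x = (y + real d) / real N"
    unfolding hutchinson_def cmap_def by auto
  have "real d + 1 \<le> real N" using d assms by force
  then have "y + real d \<le> real N" "real N > 0" using y by linarith+
  then show "x \<in> {0..1}" using x y by (auto simp: divide_le_eq_1)
qed

lemma continuous_on_cmap: "continuous_on S (cmap N d)"
  unfolding cmap_def divide_inverse by (intro continuous_intros)

lemma compact_hutchinson: "finite D \<Longrightarrow> compact S \<Longrightarrow> compact (hutchinson N D S)"
  unfolding hutchinson_def by (intro compact_UN compact_continuous_image continuous_on_cmap) auto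

lemma compact_hutchinson_iter: "finite D \<Longrightarrow> compact ((hutchinson N D ^^ n) {0..1})"
  by (induction n) (auto intro: compact_hutchinson)

lemma hutchinson_iter_nonempty: "D \<noteq> {} \<Longrightarrow> (hutchinson N D ^^ n) {0..1} \<noteq> {}"
  by (induction n) (auto simp: hutchinson_def)

lemma hutchinson_iter_antimono:
  assumes D: "D \<subseteq> {0..<N}" and "m \<le> n"
  shows "(hutchinson N D ^^ n) {0..1} \<subseteq> (hutchinson N D ^^ m) {0..1}"
proof -
  have "(hutchinson N D ^^ Suc n) {0..1} \<subseteq> (hutchinson N D ^^ n) {0..1}" for n
  proof (induction n)
    case (Suc n)
    then show ?case using hutchinson_mono by simp
  qed (use hutchinson_unit_interval[OF D] in simp)
  then show ?thesis using lift_Suc_antimono_le[of "\<lambda>n. (hutchinson N D ^^ n) {0..1}"] \<open>m \<le> n\<close>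
    by blast
qed

definition cantor_limit :: "nat \<Rightarrow> nat set \<Rightarrow> real set" where
  "cantor_limit N D = (\<Inter>n. (hutchinson N D ^^ n) {0..1})"

lemma compact_cantor_limit: "finite D \<Longrightarrow> compact (cantor_limit N D)"
  unfolding cantor_limit_def by (intro compact_Inter) (auto intro: compact_hutchinson_iter)

lemma cantor_limit_nonempty:
  assumes "D \<subseteq> {0..<N}" "D \<noteq> {}" shows "cantor_limit N D \<noteq> {}"
  unfolding cantor_limit_def
proof (rule compact_nest)
  show "\<And>n. compact ((hutchinson N D ^^ n) {0..1})"
    using assms(1) finite_subset by (blast intro: compact_hutchinson_iter)
  show "\<And>n. (hutchinson N D ^^ n) {0..1} \<noteq> {}" using assms(2) by (rule hutchinson_iter_nonempty)
  show "\<And>m n. m \<le> n \<Longrightarrow> (hutchinson N D ^^ n) {0..1} \<subseteq> (hutchinson N D ^^ m) {0..1}"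
    using hutchinson_iter_antimono[OF assms(1)] by blast
qed

lemma cmap_eq_iff: "N > 0 \<Longrightarrow> cmap N d x = cmap N d y \<longleftrightarrow> x = y"
  unfolding cmap_def by (auto simp: field_simps)

lemma hutchinson_cantor_limit_subset:
  assumes D: "D \<subseteq> {0..<N}" shows "hutchinson N D (cantor_limit N D) \<subseteq> cantor_limit N D"
proof -
  have "cantor_limit N D \<subseteq> (hutchinson N D ^^ n) {0..1}" for n
    unfolding cantor_limit_def by blast
  then have step: "hutchinson N D (cantor_limit N D) \<subseteq> (hutchinson N D ^^ Suc n) {0..1}" for n
    using hutchinson_mono[of "cantor_limit N D" "(hutchinson N D ^^ n) {0..1}" N D] by simp
  have "hutchinson N D (cantor_limit N D) \<subseteq> (hutchinson N D ^^ n) {0..1}" for n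
    using step[of n] hutchinson_iter_antimono[OF D, of n "Suc n"] by auto
  then show ?thesis by (simp add: cantor_limit_def INT_greatest)
qed

text \<open>Each level of the construction offers a digit \<open>d\<close> and a preimage of \<open>x\<close>; some digit
  recurs at infinitely many levels, and its preimage \<open>N x - d\<close> then lies in all of them.\<close>

lemma cantor_limit_subset_hutchinson:
  assumes D: "D \<subseteq> {0..<N}" "finite D" and N: "N > 0"
  shows "cantor_limit N D \<subseteq> hutchinson N D (cantor_limit N D)"
proof
  fix x assume x: "x \<in> cantor_limit N D"
  have "\<forall>n. \<exists>d\<in>D. \<exists>y. y \<in> (hutchinson N D ^^ n) {0..1} \<and> x = cmap N d y"
  proof
    fix n
    have "x \<in> (hutchinson N D ^^ Suc n) {0..1}" using x unfolding cantor_limit_def by blast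
    then show "\<exists>d\<in>D. \<exists>y. y \<in> (hutchinson N D ^^ n) {0..1} \<and> x = cmap N d y"
      by (auto simp: hutchinson_def)
  qed
  then obtain dd yy where dd: "\<And>n. dd n \<in> D" and yy: "\<And>n. yy n \<in> (hutchinson N D ^^ n) {0..1}"
    and xe: "\<And>n. x = cmap N (dd n) (yy n)" by metis
  have "\<exists>d\<in>D. infinite {n. dd n = d}"
  proof (rule ccontr)
    assume "\<not> ?thesis"
    hence "finite (\<Union>d\<in>D. {n. dd n = d})" using D by auto
    moreover have "(\<Union>d\<in>D. {n. dd n = d}) = UNIV" using dd by auto
    ultimately show False by simp
  qed
  then obtain d where d: "d \<in> D" and inf: "infinite {n. dd n = d}" by blast
  define y where "y = real N * x - real d"
  have yx: "x = cmap N d y" using N unfolding y_def cmap_def by (auto simp: field_simps)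
  have "y \<in> (hutchinson N D ^^ n) {0..1}" for n
  proof -
    obtain m where m: "m \<ge> n" "dd m = d" using inf
      by (metis (mono_tags, lifting) infinite_nat_iff_unbounded_le mem_Collect_eq)
    have "yy m = y" using cmap_eq_iff[OF N] xe[of m] yx m by simp
    thus ?thesis using yy[of m] hutchinson_iter_antimono[OF D(1) m(1)] by auto
  qed
  hence "y \<in> cantor_limit N D" unfolding cantor_limit_def by blast
  thus "x \<in> hutchinson N D (cantor_limit N D)" using d yx unfolding hutchinson_def by auto
qed

lemma hutchinson_cantor_limit:
  assumes "D \<subseteq> {0..<N}" "finite D" "N > 0"
  shows "hutchinson N D (cantor_limit N D) = cantor_limit N D"
  using hutchinson_cantor_limit_subset cantor_limit_subset_hutchinson assms by (intro equalityI)

lemma hutchinson_fixpoint_subset_unit_interval: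
  assumes D: "D \<subseteq> {0..<N}" and N: "N \<ge> 2"
    and K: "compact K" "K \<noteq> {}" "hutchinson N D K = K"
  shows "K \<subseteq> {0..1}"
proof -
  obtain m where m: "m \<in> K" "\<And>y. y \<in> K \<Longrightarrow> m \<le> y" using compact_attains_inf[OF K(1,2)] by blast
  obtain u where u: "u \<in> K" "\<And>y. y \<in> K \<Longrightarrow> y \<le> u" using compact_attains_sup[OF K(1,2)] by blast
  have NN: "real N \<ge> 2" using N by simp
  have "m \<in> hutchinson N D K" using K(3) m(1) by simp
  then obtain d y where dy: "d \<in> D" "y \<in> K" "m = (y + real d) / real N"
    unfolding hutchinson_def cmap_def by auto
  have "m * real N = y + real d" using dy(3) NN by simp
  hence "m * (real N - 1) \<ge> 0" using m(2)[OF dy(2)] by (simp add: algebra_simps)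
  hence m0: "m \<ge> 0" using NN by (simp add: zero_le_mult_iff)
  have "u \<in> hutchinson N D K" using K(3) u(1) by simp
  then obtain d' y' where dy': "d' \<in> D" "y' \<in> K" "u = (y' + real d') / real N"
    unfolding hutchinson_def cmap_def by auto
  have "u * real N = y' + real d'" using dy'(3) NN by simp
  moreover have "real d' \<le> real N - 1" using dy'(1) D by force
  ultimately have "u * (real N - 1) \<le> 1 * (real N - 1)" using u(2)[OF dy'(2)] by (simp add: algebra_simps)
  hence u1: "u \<le> 1" using NN by (simp add: mult_le_cancel_right)
  show ?thesis using m0 u1 m(2) u(2) by force
qed

lemma hutchinson_iter_near_fixpoint:
  assumes N: "N \<ge> 2" and K: "K \<subseteq> {0..1}" "K \<noteq> {}" "hutchinson N D K = K"
    and x: "x \<in> (hutchinson N D ^^ n) {0..1}"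
  shows "\<exists>y\<in>K. \<bar>x - y\<bar> \<le> 1 / real N ^ n"
  using x
proof (induction n arbitrary: x)
  case 0
  obtain y where "y \<in> K" using K(2) by blast
  then show ?case using K(1) 0 by force
next
  case (Suc n)
  have "x \<in> hutchinson N D ((hutchinson N D ^^ n) {0..1})" using Suc.prems by simp
  then obtain d x' where d: "d \<in> D" and x': "x' \<in> (hutchinson N D ^^ n) {0..1}"
    and x: "x = cmap N d x'"
    unfolding hutchinson_def by blast
  obtain y' where y': "y' \<in> K" "\<bar>x' - y'\<bar> \<le> 1 / real N ^ n" using Suc.IH x' by blast
  have yK: "cmap N d y' \<in> K" using d y' K(3) by (auto simp: hutchinson_def)
  have "\<bar>x - cmap N d y'\<bar> = \<bar>x' - y'\<bar> / real N"
    using N by (simp add: x cmap_def diff_divide_distrib[symmetric])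
  also have "\<dots> \<le> (1 / real N ^ n) / real N" using y'(2) N by (intro divide_right_mono) auto
  also have "\<dots> = 1 / real N ^ Suc n" by simp
  finally show ?case using yK by blast
qed

lemma hutchinson_fixpoint_eq_cantor_limit:
  assumes D: "D \<subseteq> {0..<N}" and N: "N \<ge> 2"
    and K: "compact K" "K \<noteq> {}" "hutchinson N D K = K"
  shows "K = cantor_limit N D"
proof
  have K01: "K \<subseteq> {0..1}" by (rule hutchinson_fixpoint_subset_unit_interval[OF assms])
  have "K \<subseteq> (hutchinson N D ^^ n) {0..1}" for n
  proof (induction n)
    case (Suc n)
    then show ?case using hutchinson_mono[OF Suc.IH, of N D] K(3) by simp
  qed (use K01 in simp)
  then show "K \<subseteq> cantor_limit N D" unfolding cantor_limit_def by blast
  show "cantor_limit N D \<subseteq> K"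
  proof
    fix x assume x: "x \<in> cantor_limit N D"
    have "x \<in> closure K"
      unfolding closure_approachable
    proof (intro allI impI)
      fix e :: real assume e: "e > 0"
      have "inverse (real N) < 1" using N by (simp add: inverse_less_1_iff)
      then obtain n where "inverse (real N) ^ n < e" using real_arch_pow_inv[OF e] by blast
      hence n: "1 / real N ^ n < e" by (simp add: inverse_eq_divide power_one_over)
      have "x \<in> (hutchinson N D ^^ n) {0..1}" using x unfolding cantor_limit_def by blast
      then obtain y where "y \<in> K" "\<bar>x - y\<bar> \<le> 1 / real N ^ n"
        using hutchinson_iter_near_fixpoint[OF N K01 K(2,3)] by blast
      then show "\<exists>y\<in>K. dist y x < e" using n unfolding dist_real_def by force
    qed
    then show "x \<in> K" using compact_imp_closed[OF K(1)] closure_closed by auto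
  qed
qed

lemma cantor_set_eq_cantor_limit:
  assumes "cantor_data N D"
  shows "cantor_set N D = cantor_limit N D"
proof -
  have D: "D \<subseteq> {0..<N}" "finite D" "D \<noteq> {}" and N: "N \<ge> 2"
    using cantor_dataD[OF assms] by auto
  have fixpoint: "(\<Union>d\<in>D. cmap N d ` cantor_limit N D) = cantor_limit N D"
    using hutchinson_cantor_limit[OF D(1,2)] N unfolding hutchinson_def by simp
  show ?thesis
    unfolding cantor_set_def
  proof (rule the_equality)
    show "cantor_limit N D \<noteq> {} \<and> compact (cantor_limit N D) \<and>
        cantor_limit N D = (\<Union>d\<in>D. cmap N d ` cantor_limit N D)"
      using cantor_limit_nonempty[OF D(1,3)] compact_cantor_limit[OF D(2)] fixpoint by simp
    fix K assume K: "K \<noteq> {} \<and> compact K \<and> K = (\<Union>d\<in>D. cmap N d ` K)"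
    have "hutchinson N D K = K"
      using K[THEN conjunct2, THEN conjunct2, symmetric] unfolding hutchinson_def .
    then show "K = cantor_limit N D"
      using hutchinson_fixpoint_eq_cantor_limit[OF D(1) N] K by blast
  qed
qed

lemma compact_cantor_set:
  assumes "cantor_data N D" shows "compact (cantor_set N D)"
  by (simp add: cantor_set_eq_cantor_limit[OF assms] compact_cantor_limit cantor_dataD[OF assms])

lemma cantor_set_subset_unit_interval:
  assumes "cantor_data N D" shows "cantor_set N D \<subseteq> {0..1}"
  unfolding cantor_set_eq_cantor_limit[OF assms] cantor_limit_def
  by (metis INT_lower UNIV_I funpow_0)

lemma cantor_set_self_similar:
  assumes "cantor_data N D" and "x \<in> cantor_set N D"
  shows "\<exists>d\<in>D. \<exists>y\<in>cantor_set N D. x = cmap N d y"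
proof -
  have "D \<subseteq> {0..<N}" "finite D" "N > 0"
    using cantor_dataD[OF assms(1)] by auto
  then have "x \<in> hutchinson N D (cantor_set N D)"
    using assms hutchinson_cantor_limit by (simp add: cantor_set_eq_cantor_limit)
  then show ?thesis unfolding hutchinson_def by blast
qed

section \<open>The self-similar measure\<close>

definition self_similar_measure :: "nat \<Rightarrow> nat set \<Rightarrow> real measure \<Rightarrow> bool" where
  "self_similar_measure N D \<mu> \<longleftrightarrow> sets \<mu> = sets borel \<and> prob_space \<mu> \<and>
     (\<forall>A\<in>sets borel. measure \<mu> A =
        (\<Sum>d\<in>D. measure \<mu> (cmap N d -` A \<inter> space \<mu>)) / real (card D))"

lemma real_distribution_self_similar: "self_similar_measure N D \<mu> \<Longrightarrow> real_distribution \<mu>"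
  unfolding self_similar_measure_def real_distribution_def real_distribution_axioms_def by auto

lemma measurable_cmap [measurable]: "cmap N d \<in> borel_measurable borel"
  unfolding cmap_def by measurable

lemma measurable_cmap_pair:
  assumes "sets \<nu> = sets borel"
  shows "(\<lambda>z. cmap N (fst z) (snd z)) \<in> borel_measurable (measure_pmf p \<Otimes>\<^sub>M \<nu>)"
proof -
  have "snd \<in> borel_measurable (measure_pmf p \<Otimes>\<^sub>M \<nu>)"
    using measurable_snd[of "measure_pmf p" \<nu>] unfolding measurable_cong_sets[OF refl assms] .
  moreover have "(\<lambda>z. real (fst z)) \<in> borel_measurable (measure_pmf p \<Otimes>\<^sub>M \<nu>)"
    by (rule measurable_compose[OF measurable_fst]) simp
  ultimately show ?thesis unfolding cmap_def by measurable
qed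

lemma self_similar_measure_eq_distr:
  assumes P: "self_similar_measure N D \<nu>" and D: "finite D" "D \<noteq> {}"
  shows "\<nu> = distr (measure_pmf (pmf_of_set D) \<Otimes>\<^sub>M \<nu>) borel (\<lambda>z. cmap N (fst z) (snd z))"
    (is "_ = distr ?P borel ?g")
proof -
  have sets: "sets \<nu> = sets borel" and "prob_space \<nu>"
    using P unfolding self_similar_measure_def by auto
  interpret prob_space \<nu> by fact
  have sp: "space \<nu> = UNIV" using sets_eq_imp_space_eq[OF sets] by simp
  have g: "?g \<in> borel_measurable ?P" by (rule measurable_cmap_pair[OF sets])
  show ?thesis
  proof (rule measure_eqI)
    show "sets \<nu> = sets (distr ?P borel ?g)" using sets by simp
    fix A assume "A \<in> sets \<nu>"
    hence A: "A \<in> sets borel" using sets by simp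
    have "emeasure (distr ?P borel ?g) A = emeasure ?P (?g -` A \<inter> space ?P)"
      by (rule emeasure_distr[OF g A])
    also have "\<dots> = (\<integral>\<^sup>+d. emeasure \<nu> (Pair d -` (?g -` A \<inter> space ?P)) \<partial>measure_pmf (pmf_of_set D))"
      by (rule emeasure_pair_measure_alt) (use g A in measurable)
    also have "\<dots> = (\<integral>\<^sup>+d. emeasure \<nu> (cmap N d -` A) \<partial>measure_pmf (pmf_of_set D))"
      by (intro nn_integral_cong arg_cong[where f="emeasure \<nu>"]) (auto simp: space_pair_measure sp)
    also have "\<dots> = (\<Sum>d\<in>D. emeasure \<nu> (cmap N d -` A) * ennreal (1 / real (card D)))"
      using D by (subst nn_integral_measure_pmf_finite) auto
    also have "\<dots> = ennreal (\<Sum>d\<in>D. measure \<nu> (cmap N d -` A) / real (card D))"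
      by (simp add: emeasure_eq_measure ennreal_mult'[symmetric] divide_inverse sum_ennreal)
    also have "(\<Sum>d\<in>D. measure \<nu> (cmap N d -` A) / real (card D)) = measure \<nu> A"
      using P A unfolding self_similar_measure_def by (simp add: sp sum_divide_distrib)
    finally show "emeasure \<nu> A = emeasure (distr ?P borel ?g) A"
      by (simp add: emeasure_eq_measure)
  qed
qed

lemma char_self_similar:
  assumes P: "self_similar_measure N D \<nu>" and D: "finite D" "D \<noteq> {}" and N: "N > 0"
  shows "char \<nu> t = (\<Sum>d\<in>D. iexp (t * real d / real N)) / real (card D) * char \<nu> (t / real N)"
proof -
  have sets: "sets \<nu> = sets borel" and "prob_space \<nu>"
    using P unfolding self_similar_measure_def by auto
  interpret prob_space \<nu> by fact
  define p where "p = pmf_of_set D"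
  interpret pair_sigma_finite "measure_pmf p" \<nu> ..
  interpret pp: prob_space "measure_pmf p \<Otimes>\<^sub>M \<nu>" by (intro prob_space_pair) unfold_locales
  have g: "(\<lambda>z. cmap N (fst z) (snd z)) \<in> borel_measurable (measure_pmf p \<Otimes>\<^sub>M \<nu>)"
    by (rule measurable_cmap_pair[OF sets])
  have int: "integrable (measure_pmf p \<Otimes>\<^sub>M \<nu>) (\<lambda>z. iexp (t * cmap N (fst z) (snd z)))"
    by (rule pp.integrable_const_bound[where B=1]) (use g in auto)
  have inner: "(CLINT x|\<nu>. iexp (t * cmap N d x)) = iexp (t * real d / real N) * char \<nu> (t / real N)"
    for d
  proof -
    have "(CLINT x|\<nu>. iexp (t * cmap N d x)) =
        (CLINT x|\<nu>. iexp (t * real d / real N) * iexp (t / real N * x))"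
      by (rule Bochner_Integration.integral_cong[OF refl])
        (simp add: cmap_def field_simps add_divide_distrib flip: exp_add)
    then show ?thesis unfolding char_def by simp
  qed
  have "char \<nu> t = (CLINT z|measure_pmf p \<Otimes>\<^sub>M \<nu>. iexp (t * cmap N (fst z) (snd z)))"
    unfolding char_def p_def
    by (subst self_similar_measure_eq_distr[OF P D], subst integral_distr) (use g p_def in auto)
  also have "\<dots> = (CLINT d|measure_pmf p. CLINT x|\<nu>. iexp (t * cmap N d x))"
    using integral_fst'[OF int] by simp
  also have "\<dots> = (CLINT d|measure_pmf p. iexp (t * real d / real N) * char \<nu> (t / real N))"
    by (simp only: inner)
  also have "\<dots> = (\<Sum>d\<in>D. pmf p d *\<^sub>R (iexp (t * real d / real N) * char \<nu> (t / real N)))"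
    by (rule integral_measure_pmf[OF D(1)]) (use D in \<open>auto simp: p_def\<close>)
  also have "\<dots> = (\<Sum>d\<in>D. iexp (t * real d / real N)) / real (card D) * char \<nu> (t / real N)"
    using D by (simp add: p_def scaleR_conv_of_real sum_distrib_right sum_divide_distrib)
  finally show ?thesis .
qed

lemma norm_average_iexp_le_1:
  assumes "finite D" "D \<noteq> {}"
  shows "cmod ((\<Sum>d\<in>D. iexp (f d)) / real (card D)) \<le> 1"
proof -
  have "cmod (\<Sum>d\<in>D. iexp (f d)) \<le> real (card D)"
    using norm_sum[of "\<lambda>d. iexp (f d)" D] by simp
  moreover have "card D > 0" using assms by (simp add: card_gt_0_iff)
  ultimately show ?thesis by (simp add: norm_divide divide_le_eq_1)
qed

text \<open>Uniqueness: the characteristic functions of two solutions differ by a function \<open>\<Delta>\<close> with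
  \<open>\<bar>\<Delta> t\<bar> \<le> \<bar>\<Delta> (t / N^n)\<bar>\<close>, which tends to \<open>\<Delta> 0 = 0\<close> by continuity.\<close>

lemma self_similar_measure_unique:
  assumes P1: "self_similar_measure N D \<nu>1" and P2: "self_similar_measure N D \<nu>2"
    and D: "finite D" "D \<noteq> {}" and N: "N \<ge> 2"
  shows "\<nu>1 = \<nu>2"
proof (rule Levy_uniqueness)
  show r1: "real_distribution \<nu>1" and r2: "real_distribution \<nu>2"
    using P1 P2 by (auto intro: real_distribution_self_similar)
  define \<Delta> where "\<Delta> t = char \<nu>1 t - char \<nu>2 t" for t
  have step: "cmod (\<Delta> t) \<le> cmod (\<Delta> (t / real N))" for t
  proof -
    have "\<Delta> t = (\<Sum>d\<in>D. iexp (t * real d / real N)) / real (card D) * \<Delta> (t / real N)"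
      unfolding \<Delta>_def using char_self_similar[OF P1 D, of t] char_self_similar[OF P2 D, of t] N
      by (simp add: right_diff_distrib)
    hence "cmod (\<Delta> t) =
        cmod ((\<Sum>d\<in>D. iexp (t * real d / real N)) / real (card D)) * cmod (\<Delta> (t / real N))"
      by (metis norm_mult)
    also have "\<dots> \<le> 1 * cmod (\<Delta> (t / real N))"
      by (intro mult_right_mono norm_average_iexp_le_1[OF D]) simp
    finally show ?thesis by simp
  qed
  have iter: "cmod (\<Delta> t) \<le> cmod (\<Delta> (t / real N ^ n))" for n t
  proof (induction n)
    case (Suc n)
    also have "cmod (\<Delta> (t / real N ^ n)) \<le> cmod (\<Delta> (t / real N ^ n / real N))" by (rule step)
    finally show ?case by (simp add: field_simps)
  qed simp
  show "char \<nu>1 = char \<nu>2"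
  proof
    fix t
    have lim0: "(\<lambda>n. t / real N ^ n) \<longlonglongrightarrow> 0" by (rule LIMSEQ_divide_realpow_zero) (use N in simp)
    have "(\<lambda>n. \<Delta> (t / real N ^ n)) \<longlonglongrightarrow> \<Delta> 0"
      unfolding \<Delta>_def
      using r1 r2 by (intro tendsto_diff isCont_tendsto_compose[OF _ lim0] real_distribution.isCont_char)
    moreover have "\<Delta> 0 = 0"
      unfolding \<Delta>_def using real_distribution.char_zero[OF r1] real_distribution.char_zero[OF r2] by simp
    ultimately have "(\<lambda>n. cmod (\<Delta> (t / real N ^ n))) \<longlonglongrightarrow> 0" using tendsto_norm by fastforce
    hence "cmod (\<Delta> t) \<le> 0" by (rule LIMSEQ_le_const) (use iter in auto)
    thus "char \<nu>1 t = char \<nu>2 t" unfolding \<Delta>_def by simp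
  qed
qed

text \<open>Existence: the image of the uniform Bernoulli measure on digit streams under
  \<open>\<omega> \<mapsto> \<Sum>i. \<omega>!!i / N^(i+1)\<close>. Truncating the digits at \<open>N\<close> keeps the series convergent for
  every stream and changes nothing on streams with digits in \<open>D\<close>.\<close>

definition digit_term :: "nat \<Rightarrow> nat stream \<Rightarrow> nat \<Rightarrow> real" where
  "digit_term N \<omega> i = real (min (\<omega> !! i) N) / real N ^ Suc i"

definition digit_value :: "nat \<Rightarrow> nat stream \<Rightarrow> real" where
  "digit_value N \<omega> = (\<Sum>i. digit_term N \<omega> i)"

lemma summable_digit_term:
  assumes N: "N \<ge> 2" shows "summable (digit_term N \<omega>)"
proof (rule summable_comparison_test)
  show "summable (\<lambda>i. (1 / real N) ^ i)" using N by (intro summable_geometric) simp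
  have "real (min (\<omega> !! n) N) / real N ^ Suc n \<le> real N / real N ^ Suc n" for n
    using N by (intro divide_right_mono) auto
  then show "\<exists>n0. \<forall>n\<ge>n0. norm (digit_term N \<omega> n) \<le> (1 / real N) ^ n"
    using N by (auto simp: digit_term_def power_divide)
qed

lemma digit_value_Cons:
  assumes N: "N \<ge> 2" and x: "x < N" shows "digit_value N (x ## \<omega>) = cmap N x (digit_value N \<omega>)"
proof -
  have "digit_value N (x ## \<omega>) = digit_term N (x ## \<omega>) 0 + (\<Sum>i. digit_term N (x ## \<omega>) (Suc i))"
    unfolding digit_value_def using suminf_split_head[OF summable_digit_term[OF N]] by simp
  also have "(\<lambda>i. digit_term N (x ## \<omega>) (Suc i)) = (\<lambda>i. digit_term N \<omega> i / real N)"
    by (auto simp: digit_term_def)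
  also have "(\<Sum>i. digit_term N \<omega> i / real N) = digit_value N \<omega> / real N"
    unfolding digit_value_def by (rule suminf_divide[OF summable_digit_term[OF N]])
  finally show ?thesis using x by (simp add: digit_term_def cmap_def add_divide_distrib)
qed

lemma measurable_digit_value:
  assumes N: "N \<ge> 2"
  shows "digit_value N \<in> borel_measurable (stream_space (measure_pmf p))"
proof (rule borel_measurable_LIMSEQ_real)
  show "(\<lambda>n. \<Sum>i<n. digit_term N \<omega> i) \<longlonglongrightarrow> digit_value N \<omega>" for \<omega>
    unfolding digit_value_def by (rule summable_LIMSEQ[OF summable_digit_term[OF N]])
  have "(\<lambda>\<omega>. digit_term N \<omega> i) \<in> borel_measurable (stream_space (measure_pmf p))" for i
    unfolding digit_term_def by (rule measurable_compose[OF measurable_snth]) simp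
  then show "(\<lambda>\<omega>. \<Sum>i<n. digit_term N \<omega> i) \<in> borel_measurable (stream_space (measure_pmf p))" for n
    by (intro borel_measurable_sum) auto
qed

lemma self_similar_measure_digit_value:
  assumes D: "finite D" "D \<noteq> {}" "D \<subseteq> {0..<N}" and N: "N \<ge> 2"
  shows "self_similar_measure N D (distr (stream_space (measure_pmf (pmf_of_set D))) borel (digit_value N))"
proof -
  define S where "S = stream_space (measure_pmf (pmf_of_set D))"
  interpret S: prob_space S
    unfolding S_def by (rule prob_space.prob_space_stream_space[OF prob_space_measure_pmf])
  have meas: "digit_value N \<in> borel_measurable S" unfolding S_def by (rule measurable_digit_value[OF N])
  define \<mu> where "\<mu> = distr S borel (digit_value N)"
  interpret \<mu>: prob_space \<mu> unfolding \<mu>_def by (rule S.prob_space_distr[OF meas])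
  have spS: "space S = UNIV" unfolding S_def by (simp add: space_stream_space)
  have "measure \<mu> A = (\<Sum>d\<in>D. measure \<mu> (cmap N d -` A)) / real (card D)"
    if A: "A \<in> sets borel" for A
  proof -
    have pre: "digit_value N -` A \<inter> space S \<in> sets S" using meas A by measurable
    have shift: "emeasure S {\<omega>\<in>space S. d ## \<omega> \<in> digit_value N -` A \<inter> space S} =
        emeasure \<mu> (cmap N d -` A)" if d: "d \<in> D" for d
    proof -
      have "{\<omega>\<in>space S. d ## \<omega> \<in> digit_value N -` A \<inter> space S} =
          digit_value N -` (cmap N d -` A) \<inter> space S"
        using digit_value_Cons[OF N] d D spS by auto
      also have "emeasure S \<dots> = emeasure \<mu> (cmap N d -` A)"
        unfolding \<mu>_def by (rule emeasure_distr[symmetric, OF meas]) (rule measurable_sets_borel[OF measurable_cmap A])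
      finally show ?thesis .
    qed
    have "emeasure \<mu> A = emeasure S (digit_value N -` A \<inter> space S)"
      unfolding \<mu>_def by (rule emeasure_distr[OF meas A])
    also have "\<dots> = (\<integral>\<^sup>+d. emeasure S {\<omega>\<in>space S. d ## \<omega> \<in> digit_value N -` A \<inter> space S}
        \<partial>measure_pmf (pmf_of_set D))"
      unfolding S_def by (rule prob_space.emeasure_stream_space[OF prob_space_measure_pmf])
        (use pre in \<open>simp add: S_def\<close>)
    also have "\<dots> = (\<Sum>d\<in>D. emeasure S {\<omega>\<in>space S. d ## \<omega> \<in> digit_value N -` A \<inter> space S}
        * ennreal (1 / real (card D)))"
      using D by (subst nn_integral_measure_pmf_finite) auto
    also have "\<dots> = (\<Sum>d\<in>D. emeasure \<mu> (cmap N d -` A) * ennreal (1 / real (card D)))"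
      by (rule sum.cong[OF refl], subst shift) auto
    also have "\<dots> = ennreal ((\<Sum>d\<in>D. measure \<mu> (cmap N d -` A)) / real (card D))"
      by (simp add: \<mu>.emeasure_eq_measure ennreal_mult'[symmetric] divide_inverse sum_ennreal
          sum_distrib_right)
    finally show ?thesis
      by (simp add: \<mu>.emeasure_eq_measure divide_nonneg_nonneg sum_nonneg)
  qed
  then show ?thesis
    unfolding self_similar_measure_def using \<mu>.prob_space_axioms by (simp add: \<mu>_def S_def)
qed

lemma self_similar_cantor_measure:
  assumes "cantor_data N D" shows "self_similar_measure N D (cantor_measure N D)"
proof -
  have D: "finite D" "D \<noteq> {}" "D \<subseteq> {0..<N}" and N: "N \<ge> 2"
    using cantor_dataD[OF assms] by auto
  let ?\<mu> = "distr (stream_space (measure_pmf (pmf_of_set D))) borel (digit_value N)"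
  have ex: "self_similar_measure N D ?\<mu>" by (rule self_similar_measure_digit_value[OF D N])
  have "cantor_measure N D = (THE \<mu>. self_similar_measure N D \<mu>)"
    unfolding cantor_measure_def self_similar_measure_def ..
  also have "\<dots> = ?\<mu>"
    using ex self_similar_measure_unique[OF _ ex D(1,2) N] by blast
  finally show ?thesis using ex by simp
qed

section \<open>Decay of the Fourier transform\<close>

lemma cos_2pi_frac: "cos (2 * pi * frac u) = cos (2 * pi * u)"
proof -
  have "2 * pi * u = 2 * pi * frac u + 2 * pi * real_of_int \<lfloor>u\<rfloor>"
    by (simp add: frac_def algebra_simps)
  then show ?thesis by (simp add: cos_add cos_int_2pin sin_int_2pin)
qed

lemma cos_2pi_le_of_frac_mem:
  assumes a: "0 \<le> a" "a \<le> 1/2" and u: "frac u \<in> {a..1-a}"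
  shows "cos (2 * pi * u) \<le> cos (2 * pi * a)"
proof -
  define v where "v = frac u"
  have v: "a \<le> v" "v \<le> 1 - a" using u by (auto simp: v_def)
  have "cos (2 * pi * v) \<le> cos (2 * pi * a)"
  proof (cases "v \<le> 1/2")
    case True
    then show ?thesis
      by (intro cos_monotone_0_pi_le) (use a v in \<open>auto intro: mult_left_mono\<close>)
  next
    case False
    have "cos (2 * pi * (1 - v)) \<le> cos (2 * pi * a)"
      by (intro cos_monotone_0_pi_le) (use a v False in \<open>auto intro: mult_left_mono\<close>)
    then show ?thesis by (simp add: right_diff_distrib cos_diff)
  qed
  then show ?thesis by (simp add: v_def cos_2pi_frac)
qed

lemma norm_1_plus_iexp: "cmod (1 + iexp \<theta>) = sqrt (2 + 2 * cos \<theta>)"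
proof -
  have "1 + iexp \<theta> = Complex (1 + cos \<theta>) (sin \<theta>)"
    by (simp flip: cis_conv_exp add: complex_eq_iff)
  hence "cmod (1 + iexp \<theta>) = sqrt ((1 + cos \<theta>)\<^sup>2 + (sin \<theta>)\<^sup>2)"
    by (simp add: cmod_def)
  also have "(1 + cos \<theta>)\<^sup>2 + (sin \<theta>)\<^sup>2 = 2 + 2 * cos \<theta>"
    using sin_cos_squared_add[of \<theta>] by (simp add: power2_eq_square algebra_simps)
  finally show ?thesis .
qed

definition fourier_mask :: "nat set \<Rightarrow> real \<Rightarrow> complex" where
  "fourier_mask B s = (\<Sum>d\<in>B. iexp (2 * pi * s * real d)) / real (card B)"

definition mask_bound :: "nat \<Rightarrow> nat set \<Rightarrow> real" where
  "mask_bound M B =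
     (real (card B) - 2 + sqrt (2 + 2 * cos (2 * pi * (1 / (4 * real M))))) / real (card B)"

lemma norm_fourier_mask_le_1: "finite B \<Longrightarrow> B \<noteq> {} \<Longrightarrow> cmod (fourier_mask B s) \<le> 1"
  unfolding fourier_mask_def by (rule norm_average_iexp_le_1)

text \<open>Two digits \<open>b0 < b1\<close> whose phases \<open>2\<pi>s b0\<close>, \<open>2\<pi>s b1\<close> are not nearly aligned already force
  cancellation in the average defining the mask.\<close>

lemma norm_fourier_mask_le_mask_bound:
  assumes B: "finite B" and b: "b0 \<in> B" "b1 \<in> B" "b0 < b1" and M: "M \<ge> 3"
    and good: "frac (real (b1 - b0) * s) \<in> {1 / (4 * real M)..1 - 1 / (4 * real M)}"
  shows "cmod (fourier_mask B s) \<le> mask_bound M B"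
proof -
  define a where "a = 1 / (4 * real M)"
  have a: "0 \<le> a" "a \<le> 1/2" using M by (auto simp: a_def field_simps)
  define E where "E d = iexp (2 * pi * s * real d)" for d
  have card: "card B \<ge> 2" using card_mono[OF B, of "{b0, b1}"] b by simp
  have "(\<Sum>d\<in>B. E d) = E b0 + E b1 + (\<Sum>d\<in>B - {b0, b1}. E d)"
    using B b by (subst sum.subset_diff[of "{b0, b1}"]) auto
  hence "cmod (\<Sum>d\<in>B. E d) \<le> cmod (E b0 + E b1) + cmod (\<Sum>d\<in>B - {b0, b1}. E d)"
    by (metis norm_triangle_ineq)
  also have "cmod (\<Sum>d\<in>B - {b0, b1}. E d) \<le> (\<Sum>d\<in>B - {b0, b1}. cmod (E d))" by (rule norm_sum)
  also have "\<dots> = real (card B) - 2"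
    using B b card by (simp add: E_def card_Diff_subset of_nat_diff)
  also have "E b0 + E b1 = E b0 * (1 + iexp (2 * pi * (real (b1 - b0) * s)))"
    using b by (simp add: E_def algebra_simps of_nat_diff flip: exp_add)
  also have "cmod \<dots> = sqrt (2 + 2 * cos (2 * pi * (real (b1 - b0) * s)))"
    by (simp only: norm_mult norm_1_plus_iexp) (simp add: E_def)
  also have "\<dots> \<le> sqrt (2 + 2 * cos (2 * pi * a))"
    using cos_2pi_le_of_frac_mem[OF a good[folded a_def]] by simp
  finally have "cmod (\<Sum>d\<in>B. E d) \<le> real (card B) - 2 + sqrt (2 + 2 * cos (2 * pi * a))" by simp
  then show ?thesis
    using card by (simp add: fourier_mask_def mask_bound_def a_def E_def norm_divide divide_right_mono)
qed

lemma mask_bound_bounds: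
  assumes M: "M \<ge> 3" and B: "card B \<ge> 2" shows "0 \<le> mask_bound M B" "mask_bound M B < 1"
proof -
  define a where "a = 1 / (4 * real M)"
  have a: "0 < a" "a \<le> 1/2" using M by (auto simp: a_def field_simps)
  have "cos (2 * pi * a) < cos 0"
    by (rule cos_monotone_0_pi) (use a in auto)
  hence "sqrt (2 + 2 * cos (2 * pi * a)) < sqrt 4" by (simp only: real_sqrt_less_iff) simp
  hence "sqrt (2 + 2 * cos (2 * pi * a)) < 2" by simp
  then show "mask_bound M B < 1"
    using B unfolding mask_bound_def a_def[symmetric] by (simp add: divide_less_eq)
  have "0 \<le> 2 + 2 * cos (2 * pi * a)" using cos_ge_minus_one[of "2 * pi * a"] by linarith
  then show "0 \<le> mask_bound M B"
    using B unfolding mask_bound_def a_def[symmetric] by (intro divide_nonneg_nonneg) auto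
qed

lemma char_eq_prod_fourier_mask:
  assumes P: "self_similar_measure M B \<nu>" and B: "finite B" "B \<noteq> {}" and M: "M > 0"
  shows "char \<nu> (2 * pi * t) =
    (\<Prod>i<I. fourier_mask B (t / real M ^ Suc i)) * char \<nu> (2 * pi * (t / real M ^ I))"
proof (induction I)
  case (Suc I)
  have "char \<nu> (2 * pi * (t / real M ^ I)) =
      fourier_mask B (t / real M ^ I / real M) * char \<nu> (2 * pi * (t / real M ^ I / real M))"
    using char_self_similar[OF P B M, of "2 * pi * (t / real M ^ I)"]
    by (simp add: fourier_mask_def mult.assoc)
  with Suc show ?case by (simp add: field_simps)
qed simp

lemma norm_char_le_mask_bound_pow:
  assumes P: "self_similar_measure M B \<nu>" and B: "finite B" and b: "b0 \<in> B" "b1 \<in> B" "b0 < b1"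
    and M: "M \<ge> 3" and S: "finite S"
    and good: "\<And>i. i \<in> S \<Longrightarrow>
      frac (real (b1 - b0) * (t / real M ^ Suc i)) \<in> {1 / (4 * real M)..1 - 1 / (4 * real M)}"
  shows "cmod (char \<nu> (2 * pi * t)) \<le> mask_bound M B ^ card S"
proof -
  have Bne: "B \<noteq> {}" using b by auto
  interpret real_distribution \<nu> using P by (rule real_distribution_self_similar)
  obtain I where I: "S \<subseteq> {..<I}" using S by (meson finite_nat_bounded)
  have "cmod (char \<nu> (2 * pi * t)) =
      (\<Prod>i<I. cmod (fourier_mask B (t / real M ^ Suc i))) * cmod (char \<nu> (2 * pi * (t / real M ^ I)))"
    using char_eq_prod_fourier_mask[OF P B Bne, of t I] M by (simp add: norm_mult prod_norm)
  also have "\<dots> \<le> (\<Prod>i<I. cmod (fourier_mask B (t / real M ^ Suc i)))"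
    using cmod_char_le_1 by (simp add: mult_left_le prod_nonneg)
  also have "\<dots> \<le> (\<Prod>i<I. if i \<in> S then mask_bound M B else 1)"
    using norm_fourier_mask_le_mask_bound[OF B b M good] norm_fourier_mask_le_1[OF B Bne]
    by (auto intro!: prod_mono)
  also have "\<dots> = mask_bound M B ^ card S"
    using I by (simp add: prod.If_cases Int_absorb1 Int_absorb2 subset_eq)
  finally show ?thesis .
qed

lemma char_uminus: "char \<nu> (- t) = cnj (char \<nu> t)"
proof -
  have "(\<lambda>x. iexp (- t * x)) = (\<lambda>x. cnj (iexp (t * x)))"
    by (auto simp: exp_cnj)
  then show ?thesis unfolding char_def by simp
qed

section \<open>Powers of \<open>N\<close> with many prescribed base-\<open>M\<close> digits\<close>

lemma ln_ratio_irrational: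
  assumes ind: "mult_independent (int M) (int N)" and M: "M \<ge> 2" and N: "N \<ge> 2"
  shows "ln (real N) / ln (real M) \<notin> \<rat>"
proof
  assume "ln (real N) / ln (real M) \<in> \<rat>"
  then obtain a b :: int where b: "b > 0" and ab: "ln (real N) / ln (real M) = of_int a / of_int b"
    by (rule Rats_cases') blast
  have lnM: "ln (real M) > 0" and lnN: "ln (real N) > 0" using M N by simp_all
  have "of_int a / of_int b > (0::real)" using ab lnM lnN by (metis divide_pos_pos)
  hence a: "a > 0" using b by (simp add: zero_less_divide_iff)
  have "real_of_int b * ln (real N) = real_of_int a * ln (real M)"
    using ab lnM b by (simp add: field_simps)
  hence "ln (real N ^ nat b) = ln (real M ^ nat a)"
    using a b by (simp add: ln_realpow)
  hence "real N ^ nat b = real M ^ nat a"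
    using M N by (subst (asm) ln_inj_iff) auto
  moreover have "(of_int (int M) :: real) powi a = real M ^ nat a"
    "(of_int (int N) :: real) powi b = real N ^ nat b"
    using a b by (simp_all add: power_int_def)
  ultimately have "(of_int (int M) :: real) powi a = of_int (int N) powi b" by simp
  hence "mult_dependent (int M) (int N)"
    unfolding mult_dependent_def using a by (intro exI[of _ a] exI[of _ b]) simp
  with ind show False unfolding mult_independent_def by simp
qed

lemma exists_frac_mult_near:
  assumes \<alpha>: "\<alpha> \<notin> \<rat>" and \<beta>: "0 \<le> \<beta>" "\<beta> \<le> 1" and \<delta>: "\<delta> > 0" and K: "K > 0"
  shows "\<exists>k\<ge>K. \<bar>frac (real k * \<alpha>) - \<beta>\<bar> < \<delta>"
proof -
  have "real K * \<alpha> \<notin> \<rat>"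
  proof
    assume "real K * \<alpha> \<in> \<rat>"
    hence "real K * \<alpha> / real K \<in> \<rat>" by (intro Rats_divide) auto
    thus False using \<alpha> K by simp
  qed
  then obtain k' where "k' > 0" "\<bar>frac (real k' * (real K * \<alpha>)) - \<beta>\<bar> < \<delta>"
    using Kronecker_approx_1_explicit \<beta> \<delta> by blast
  then show ?thesis by (intro exI[of _ "k' * K"]) (auto simp: mult.assoc)
qed

text \<open>Since \<open>log\<^sub>M N\<close> is irrational, the fractional parts of \<open>k log\<^sub>M N\<close> are dense, so the ratios
  \<open>N^k / M^j\<close> come arbitrarily close to any \<open>\<tau> \<in> [1, M)\<close>.\<close>

lemma exists_power_ratio_near:
  assumes M: "M \<ge> 2" and N: "N \<ge> 2" and irr: "ln (real N) / ln (real M) \<notin> \<rat>"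
    and \<tau>: "1 \<le> \<tau>" "\<tau> < real M" and \<eta>: "\<eta> > 0"
  shows "\<exists>k j. j \<ge> J \<and> \<bar>real N ^ k / real M ^ j - \<tau>\<bar> < \<eta>"
proof -
  have lnM: "ln (real M) > 0" and lnN: "ln (real N) > 0" using M N by simp_all
  define \<alpha> where "\<alpha> = ln (real N) / ln (real M)"
  have \<alpha>: "\<alpha> > 0" using lnM lnN by (simp add: \<alpha>_def)
  define \<beta> where "\<beta> = ln \<tau> / ln (real M)"
  have \<beta>: "0 \<le> \<beta>" "\<beta> < 1" using \<tau> lnM M by (auto simp: \<beta>_def divide_less_eq)
  have "real M powr \<beta> = \<tau>" using \<tau> M lnM by (simp add: \<beta>_def powr_def)
  moreover have "isCont (\<lambda>f. real M powr f) \<beta>" using M by (intro continuous_intros) auto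
  ultimately obtain \<delta> where \<delta>: "\<delta> > 0" and \<delta>': "\<And>f. \<bar>f - \<beta>\<bar> < \<delta> \<Longrightarrow> \<bar>real M powr f - \<tau>\<bar> < \<eta>"
    using \<eta> unfolding isCont_def LIM_def dist_real_def
    by (metis abs_zero cancel_comm_monoid_add_class.diff_cancel)
  obtain K where K: "real M ^ Suc J < real N ^ K" using real_arch_pow[of "real N"] N by auto
  have "1 \<le> real M ^ Suc J" using M by (intro one_le_power) simp
  hence "K > 0" using K by (cases K) auto
  then obtain k where k: "k \<ge> K" "\<bar>frac (real k * \<alpha>) - \<beta>\<bar> < \<delta>"
    using exists_frac_mult_near[of \<alpha> \<beta> \<delta> K] irr \<beta> \<delta> by (auto simp: \<alpha>_def)
  define f where "f = frac (real k * \<alpha>)"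
  define j where "j = nat \<lfloor>real k * \<alpha>\<rfloor>"
  have kj: "real k * \<alpha> = real j + f" using \<alpha> by (simp add: j_def f_def frac_def)
  have "real N ^ k = real M powr (real k * \<alpha>)"
    using lnM lnN M N by (simp add: powr_def \<alpha>_def powr_realpow[symmetric] ln_realpow)
  also have "\<dots> = real M ^ j * real M powr f"
    using M by (simp add: kj powr_add powr_realpow)
  finally have Nk: "real N ^ k = real M ^ j * real M powr f" .
  have "real M ^ Suc J < real M ^ j * real M powr f"
    using K power_increasing[OF k(1), of "real N"] N Nk by simp
  also have "\<dots> \<le> real M ^ Suc j"
    using powr_mono[of f 1 "real M"] M by (simp add: f_def frac_lt_1 less_imp_le mult.commute)
  finally have "j \<ge> J" using M by (simp add: power_strict_increasing_iff)
  moreover have "\<bar>real N ^ k / real M ^ j - \<tau>\<bar> < \<eta>"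
    using \<delta>' k(2) M by (simp add: Nk f_def)
  ultimately show ?thesis by blast
qed

definition lacunary_sum :: "nat \<Rightarrow> nat \<Rightarrow> nat \<Rightarrow> real" where
  "lacunary_sum M D T = 1 + (\<Sum>t\<in>{1..T}. 1 / real M ^ (t * D))"

lemma lacunary_sum_bounds:
  assumes "M \<ge> 1" shows "1 \<le> lacunary_sum M D T" "lacunary_sum M D T \<le> 1 + real T / real M ^ D"
proof -
  show "1 \<le> lacunary_sum M D T" unfolding lacunary_sum_def by (simp add: sum_nonneg)
  have "1 / real M ^ (t * D) \<le> 1 / real M ^ D" if "t \<in> {1..T}" for t
    using that assms by (intro divide_left_mono power_increasing) auto
  then have "(\<Sum>t\<in>{1..T}. 1 / real M ^ (t * D)) \<le> real T / real M ^ D"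
    using sum_mono[of "{1..T}" "\<lambda>t. 1 / real M ^ (t * D)" "\<lambda>_. 1 / real M ^ D"] by simp
  then show "lacunary_sum M D T \<le> 1 + real T / real M ^ D" unfolding lacunary_sum_def by simp
qed

text \<open>Multiplying by \<open>M^(tD - e)\<close> moves the \<open>t\<close>-th term of the lacunary sum to \<open>1/M^e\<close>:
  the earlier terms become integers and the later ones a small remainder.\<close>

lemma lacunary_sum_scaled_split:
  assumes M: "M \<ge> 2" and t: "1 \<le> t" "t \<le> T" and eD: "e \<le> D"
  shows "\<exists>(Z::nat) r. real M ^ (t * D - e) * lacunary_sum M D T = real Z + 1 / real M ^ e + r \<and>
    0 \<le> r \<and> r \<le> real T / (real M ^ e * real M ^ D)"
proof -
  define c where "c = t * D - e"
  have M0: "real M \<noteq> 0" using M by simp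
  have et: "e \<le> t * D" using eD t by (metis le_trans mult_1 mult_le_mono1)
  have split: "{1..T} = {1..<t} \<union> ({t} \<union> {t<..T})" using t by auto
  define r where "r = (\<Sum>t'\<in>{t<..T}. real M ^ c / real M ^ (t' * D))"
  define Z where "Z = M ^ c + (\<Sum>t'\<in>{1..<t}. M ^ (c - t' * D))"
  have low: "real M ^ c / real M ^ (t' * D) = real (M ^ (c - t' * D))" if "t' \<in> {1..<t}" for t'
  proof -
    have "(t' + 1) * D \<le> t * D" using that by (intro mult_right_mono) auto
    hence "t' * D \<le> c" using eD by (simp add: c_def algebra_simps)
    then have "real M ^ (c - t' * D) = real M ^ c / real M ^ (t' * D)" by (rule power_diff[OF M0])
    then show ?thesis by simp
  qed
  have mid: "real M ^ c / real M ^ (t * D) = 1 / real M ^ e"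
    using et M0 by (simp add: c_def power_diff power_divide)
  have hi: "real M ^ c / real M ^ (t' * D) \<le> 1 / (real M ^ e * real M ^ D)" if "t' \<in> {t<..T}" for t'
  proof -
    have "(t + 1) * D \<le> t' * D" using that by (intro mult_right_mono) auto
    hence eq: "t' * D = c + e + D + (t' * D - t * D - D)" using et by (simp add: c_def algebra_simps)
    have "real M ^ (t' * D) = real M ^ (c + e + D + (t' * D - t * D - D))"
      by (subst eq) (rule refl)
    also have "\<dots> = real M ^ c * (real M ^ e * real M ^ D) * real M ^ (t' * D - t * D - D)"
      by (simp only: power_add mult_ac)
    finally have "real M ^ (t' * D) =
        real M ^ c * (real M ^ e * real M ^ D) * real M ^ (t' * D - t * D - D)" .
    moreover have "1 \<le> real M ^ (t' * D - t * D - D)" using M by (intro one_le_power) simp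
    ultimately show ?thesis using M by (simp add: field_simps)
  qed
  have r0: "0 \<le> r" unfolding r_def by (intro sum_nonneg) auto
  have "r \<le> (\<Sum>t'\<in>{t<..T}. 1 / (real M ^ e * real M ^ D))" unfolding r_def by (intro sum_mono hi)
  also have "\<dots> \<le> real T / (real M ^ e * real M ^ D)"
    using M by (simp add: divide_right_mono)
  finally have rT: "r \<le> real T / (real M ^ e * real M ^ D)" .
  have "real M ^ c * lacunary_sum M D T = real M ^ c + (\<Sum>t'\<in>{1..T}. real M ^ c / real M ^ (t' * D))"
    by (simp add: lacunary_sum_def algebra_simps sum_distrib_left)
  also have "\<dots> = real M ^ c + ((\<Sum>t'\<in>{1..<t}. real M ^ c / real M ^ (t' * D)) +
      (real M ^ c / real M ^ (t * D) + r))"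
    unfolding split r_def by (subst sum.union_disjoint; auto)+
  also have "(\<Sum>t'\<in>{1..<t}. real M ^ c / real M ^ (t' * D)) = (\<Sum>t'\<in>{1..<t}. real (M ^ (c - t' * D)))"
    by (intro sum.cong refl low)
  finally have "real M ^ c * lacunary_sum M D T = real Z + 1 / real M ^ e + r"
    by (simp add: mid Z_def)
  then show ?thesis using r0 rT unfolding c_def by blast
qed

lemma frac_mem_window_of_abs:
  assumes a: "0 < a" and v: "a \<le> \<bar>v\<bar>" "\<bar>v\<bar> \<le> 1 - a"
  shows "frac v \<in> {a..1 - a}"
proof (cases "v \<ge> 0")
  case True
  then show ?thesis using a v by simp
next
  case False
  have "frac v = v + 1" unfolding frac_unique_iff using False a v by simp
  then show ?thesis using False v by simp
qed

lemma frac_mem_window_of_near_int: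
  fixes u err z :: real
  assumes M: "M \<ge> 3" and z: "z \<in> \<int>"
    and u: "1 / (2 * real M) \<le> \<bar>u\<bar>" "\<bar>u\<bar> < 1/2" and err: "\<bar>err\<bar> \<le> 1 / (4 * real M)"
  shows "frac (z + u + err) \<in> {1 / (4 * real M)..1 - 1 / (4 * real M)}"
proof -
  have "1 / (4 * real M) \<le> 1/4" using M by (simp add: divide_le_eq)
  moreover have "1 / (2 * real M) = 2 * (1 / (4 * real M))" by simp
  ultimately have "frac (u + err) \<in> {1 / (4 * real M)..1 - 1 / (4 * real M)}"
    using M u err by (intro frac_mem_window_of_abs) (simp, linarith+)
  then show ?thesis using z by (simp add: frac_add_int_left add.assoc)
qed

lemma exists_pow_bracket:
  fixes g :: int assumes M: "M \<ge> 2" and g: "g \<noteq> 0"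
  shows "\<exists>e\<ge>1. real M ^ (e - 1) \<le> 2 * \<bar>real_of_int g\<bar> \<and> 2 * \<bar>real_of_int g\<bar> < real M ^ e"
proof -
  define y where "y = 2 * \<bar>real_of_int g\<bar>"
  have y: "1 \<le> y" using g by (simp add: y_def)
  define e where "e = (LEAST e. y < real M ^ e)"
  have ex: "\<exists>e. y < real M ^ e" using M by (intro real_arch_pow) auto
  have ye: "y < real M ^ e" unfolding e_def by (rule LeastI_ex[OF ex])
  have "e \<noteq> 0" using ye y by (intro notI) simp
  moreover have "\<not> y < real M ^ (e - 1)" using \<open>e \<noteq> 0\<close> unfolding e_def
    by (intro not_less_Least) simp
  ultimately show ?thesis using ye unfolding y_def by (intro exI[of _ e]) auto
qed

lemma abs_div_pow_bracket:
  fixes x :: real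
  assumes M: "M > 0" and e: "1 \<le> e" "real M ^ (e - 1) \<le> 2 * \<bar>x\<bar>" "2 * \<bar>x\<bar> < real M ^ e"
  shows "1 / (2 * real M) \<le> \<bar>x / real M ^ e\<bar>" "\<bar>x / real M ^ e\<bar> < 1/2"
proof -
  have Me: "real M ^ e > 0" using M by simp
  show "\<bar>x / real M ^ e\<bar> < 1/2" using e(3) Me by (simp add: abs_divide divide_less_eq)
  have "real M ^ e = real M * real M ^ (e - 1)" using e(1) by (simp add: power_eq_if)
  then show "1 / (2 * real M) \<le> \<bar>x / real M ^ e\<bar>"
    using e(2) Me M by (simp add: abs_divide field_simps)
qed

text \<open>The integer \<open>g P - A\<close>, where \<open>P/M^j\<close> approximates \<open>\<tau> = 1 + \<Sum>\<^sub>t M^(-tD)\<close>, has a base-\<open>M\<close>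
  digit far from \<open>0\<close> at position \<open>j + e - tD\<close>, coming from the term \<open>g/M^e\<close> with \<open>|g| \<approx> M^e\<close>.\<close>

lemma frac_mem_window_at_lacunary_position:
  fixes g A :: int and P :: real
  assumes M: "M \<ge> 3"
    and e: "1 \<le> e" "e \<le> D" "real M ^ (e - 1) \<le> 2 * \<bar>real_of_int g\<bar>" "2 * \<bar>real_of_int g\<bar> < real M ^ e"
    and t: "1 \<le> t" "t \<le> T" "t * D \<le> j"
    and D: "6 * real M * real T \<le> real M ^ D"
    and P: "\<bar>real_of_int g\<bar> * real M ^ (T * D) * \<bar>P / real M ^ j - lacunary_sum M D T\<bar> \<le> 1 / (12 * real M)"
    and A: "12 * real M * \<bar>real_of_int A\<bar> \<le> real M ^ (j + e - t * D)"
  shows "frac ((real_of_int g * P - real_of_int A) / real M ^ (j + e - t * D))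
    \<in> {1 / (4 * real M)..1 - 1 / (4 * real M)}"
proof -
  define \<tau> where "\<tau> = lacunary_sum M D T"
  define \<iota> where "\<iota> = j + e - t * D"
  define c where "c = t * D - e"
  define x where "x = P / real M ^ j"
  have Mr: "real M \<ge> 3" using M by simp
  have "e \<le> t * D" using e(2) t(1) by (metis le_trans mult_1 mult_le_mono1)
  hence "j = \<iota> + c" using t(3) by (simp add: \<iota>_def c_def)
  hence P_eq: "P / real M ^ \<iota> = x * real M ^ c" using Mr by (simp add: x_def power_add)
  have "t * D \<le> T * D" using t(2) by (rule mult_le_mono1)
  hence cTD: "c \<le> T * D" unfolding c_def by linarith
  obtain Z :: nat and r where Z: "real M ^ c * \<tau> = real Z + 1 / real M ^ e + r"
    and r: "0 \<le> r" "r \<le> real T / (real M ^ e * real M ^ D)"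
    using lacunary_sum_scaled_split[of M t T e D] M t e unfolding \<tau>_def c_def by auto
  have val: "(real_of_int g * P - real_of_int A) / real M ^ \<iota> = real_of_int (g * int Z) +
      real_of_int g / real M ^ e + (real_of_int g * r + real_of_int g * real M ^ c * (x - \<tau>) - real_of_int A / real M ^ \<iota>)"
  proof -
    have "(real_of_int g * P - real_of_int A) / real M ^ \<iota> =
        real_of_int g * (x * real M ^ c) - real_of_int A / real M ^ \<iota>"
      by (simp add: diff_divide_distrib P_eq[symmetric])
    also have "real_of_int g * (x * real M ^ c) =
        real_of_int g * (real M ^ c * \<tau>) + real_of_int g * real M ^ c * (x - \<tau>)"
      by (simp add: algebra_simps)
    also have "real M ^ c * \<tau> = real Z + 1 / real M ^ e + r" by (rule Z)
    finally show ?thesis by (simp add: algebra_simps)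
  qed
  have Me: "real M ^ e > 0" "real M ^ D > 0" using Mr by simp_all
  have u_lo: "1 / (2 * real M) \<le> \<bar>real_of_int g / real M ^ e\<bar>"
    and u_hi: "\<bar>real_of_int g / real M ^ e\<bar> < 1/2"
    using abs_div_pow_bracket[of M e "real_of_int g"] e M by simp_all
  have "\<bar>real_of_int g * r\<bar> = \<bar>real_of_int g\<bar> / real M ^ e * (r * real M ^ e)"
    using r Me Mr by (simp add: abs_mult)
  also have "\<dots> \<le> (1/2) * (real T / real M ^ D)"
    using u_hi r Me by (intro mult_mono) (auto simp: abs_divide field_simps)
  also have "\<dots> \<le> 1 / (12 * real M)" using D Me Mr by (simp add: field_simps)
  finally have err1: "\<bar>real_of_int g * r\<bar> \<le> 1 / (12 * real M)" .
  have "\<bar>real_of_int g * real M ^ c * (x - \<tau>)\<bar> \<le> \<bar>real_of_int g\<bar> * real M ^ (T * D) * \<bar>x - \<tau>\<bar>"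
    unfolding abs_mult using cTD Mr by (intro mult_right_mono mult_left_mono power_increasing) auto
  hence err2: "\<bar>real_of_int g * real M ^ c * (x - \<tau>)\<bar> \<le> 1 / (12 * real M)"
    using P by (simp add: x_def \<tau>_def)
  have err3: "\<bar>real_of_int A / real M ^ \<iota>\<bar> \<le> 1 / (12 * real M)"
    using A Mr by (simp add: \<iota>_def abs_divide field_simps)
  have "\<bar>real_of_int g * r + real_of_int g * real M ^ c * (x - \<tau>) - real_of_int A / real M ^ \<iota>\<bar>
      \<le> 3 * (1 / (12 * real M))"
    using err1 err2 err3 by linarith
  then show ?thesis unfolding \<iota>_def[symmetric] val
    by (intro frac_mem_window_of_near_int[OF M _ u_lo u_hi]) auto
qed

lemma exists_good_digit_positions:
  fixes g A :: int and P :: real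
  assumes M: "M \<ge> 3" and D: "0 < D" "6 * real M * real T \<le> real M ^ D"
    and e: "1 \<le> e" "e \<le> D" "real M ^ (e - 1) \<le> 2 * \<bar>real_of_int g\<bar>" "2 * \<bar>real_of_int g\<bar> < real M ^ e"
    and j: "T * D + J \<le> j" and A: "12 * real M * \<bar>real_of_int A\<bar> \<le> real M ^ J"
    and P: "\<bar>real_of_int g\<bar> * real M ^ (T * D) * \<bar>P / real M ^ j - lacunary_sum M D T\<bar> \<le> 1 / (12 * real M)"
  shows "\<exists>S. finite S \<and> card S = T \<and> (\<forall>i\<in>S.
    frac ((real_of_int g * P - real_of_int A) / real M ^ Suc i) \<in> {1 / (4 * real M)..1 - 1 / (4 * real M)})"
proof -
  define pos where "pos t = j + e - t * D - 1" for t
  have tDj: "t * D + J \<le> j" if "t \<le> T" for t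
    using j mult_le_mono1[OF that, of D] by linarith
  have "inj_on pos {1..T}"
  proof (rule inj_onI)
    fix t1 t2 assume t: "t1 \<in> {1..T}" "t2 \<in> {1..T}" and "pos t1 = pos t2"
    moreover have "t1 * D \<le> j" "t2 * D \<le> j" using tDj[of t1] tDj[of t2] t by auto
    ultimately have "t1 * D = t2 * D" using e(1) unfolding pos_def by arith
    then show "t1 = t2" using D(1) by simp
  qed
  moreover have "frac ((real_of_int g * P - real_of_int A) / real M ^ Suc (pos t))
      \<in> {1 / (4 * real M)..1 - 1 / (4 * real M)}" if t: "t \<in> {1..T}" for t
  proof -
    have "real M ^ J \<le> real M ^ (j + e - t * D)"
      using tDj[of t] t M by (intro power_increasing) auto
    then have "12 * real M * \<bar>real_of_int A\<bar> \<le> real M ^ (j + e - t * D)" using A by linarith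
    moreover have "Suc (pos t) = j + e - t * D" using tDj[of t] t e by (simp add: pos_def)
    ultimately show ?thesis
      using frac_mem_window_at_lacunary_position[OF M e _ _ _ D(2) P] t tDj[of t] by simp
  qed
  ultimately show ?thesis by (intro exI[of _ "pos ` {1..T}"]) (simp add: card_image)
qed

lemma six_mul_le_pow:
  assumes M: "M \<ge> 3" shows "6 * real M * real T \<le> real M ^ (E + T + 4)"
proof -
  have Mr: "real M \<ge> 3" using M by simp
  have "real T < 2 ^ T" using less_exp[of T] by (metis of_nat_less_iff of_nat_numeral of_nat_power)
  also have "(2::real) ^ T \<le> real M ^ T" using Mr by (intro power_mono) auto
  finally have "real T \<le> real M ^ T" by simp
  moreover have "6 * real M \<le> real M ^ 4"
    using Mr mult_left_mono[of 6 "real M ^ 3" "real M"] power_mono[of 3 "real M" 3]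
    by (simp add: power_Suc[symmetric] mult.commute)
  ultimately have "6 * real M * real T \<le> real M ^ 4 * real M ^ T"
    by (intro mult_mono) auto
  also have "\<dots> \<le> real M ^ E * (real M ^ T * real M ^ 4)"
    using Mr by (simp add: mult.commute)
  finally show ?thesis by (simp add: power_add mult_ac)
qed

text \<open>One power \<open>N^k\<close> serves all \<open>g \<in> G\<close> and all shifts \<open>|A| \<le> R\<close>: take \<open>N^k \<approx> \<tau> M^j\<close> with the
  lacunary \<open>\<tau>\<close> of spacing \<open>D\<close> larger than every \<open>log\<^sub>M |g|\<close>, and \<open>j\<close> so large that \<open>A\<close> only affects
  digits below the ones used.\<close>

lemma exists_power_with_good_digits:
  fixes G :: "int set" and R :: real
  assumes M: "M \<ge> 3" and N: "N \<ge> 2" and irr: "ln (real N) / ln (real M) \<notin> \<rat>"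
    and G: "finite G" "0 \<notin> G"
  shows "\<exists>k. \<forall>g\<in>G. \<forall>A::int. \<bar>real_of_int A\<bar> \<le> R \<longrightarrow>
           (\<exists>S. finite S \<and> card S = T \<and>
              (\<forall>i\<in>S. frac (real_of_int (g * int N ^ k - A) / real M ^ Suc i)
                        \<in> {1 / (4 * real M)..1 - 1 / (4 * real M)}))"
proof -
  have Mr: "real M \<ge> 3" using M by simp
  have "\<exists>e\<ge>1. real M ^ (e - 1) \<le> 2 * \<bar>real_of_int g\<bar> \<and> 2 * \<bar>real_of_int g\<bar> < real M ^ e"
    if "g \<in> G" for g
    using exists_pow_bracket[of M g] M G that by auto
  then obtain ee where ee: "\<And>g. g \<in> G \<Longrightarrow> 1 \<le> ee g \<and>
      real M ^ (ee g - 1) \<le> 2 * \<bar>real_of_int g\<bar> \<and> 2 * \<bar>real_of_int g\<bar> < real M ^ ee g"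
    by metis
  define D where "D = Max (ee ` G) + T + 4"
  have eD: "ee g \<le> D" if "g \<in> G" for g
  proof -
    have "ee g \<le> Max (ee ` G)" using G that by (intro Max_ge) auto
    then show ?thesis by (simp add: D_def)
  qed
  have MD: "6 * real M * real T \<le> real M ^ D" unfolding D_def by (rule six_mul_le_pow[OF M])
  define Gm where "Gm = 1 + (\<Sum>g\<in>G. \<bar>real_of_int g\<bar>)"
  have Gm: "\<bar>real_of_int g\<bar> \<le> Gm" if "g \<in> G" for g
    using member_le_sum[of g G "\<lambda>g. \<bar>real_of_int g\<bar>"] G that by (simp add: Gm_def)
  have Gm1: "Gm \<ge> 1" by (simp add: Gm_def sum_nonneg)
  define \<tau> where "\<tau> = lacunary_sum M D T"
  have "real T / real M ^ D \<le> 1 / (6 * real M)"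
    using MD Mr by (simp add: divide_le_eq field_simps)
  moreover have "1 / (6 * real M) < 1" using Mr by simp
  ultimately have \<tau>: "1 \<le> \<tau>" "\<tau> < real M"
    using lacunary_sum_bounds[of M D T] Mr unfolding \<tau>_def by linarith+
  define \<eta> where "\<eta> = 1 / (12 * real M * Gm * real M ^ (T * D))"
  have \<eta>: "\<eta> > 0" using Mr Gm1 by (simp add: \<eta>_def)
  obtain J where J: "12 * real M * R < real M ^ J" using real_arch_pow Mr by fastforce
  obtain k j where j: "j \<ge> T * D + J" and close: "\<bar>real N ^ k / real M ^ j - \<tau>\<bar> < \<eta>"
    using exists_power_ratio_near[of M N \<tau> \<eta> "T * D + J"] M N irr \<tau> \<eta> by auto
  have "\<exists>S. finite S \<and> card S = T \<and> (\<forall>i\<in>S. frac (real_of_int (g * int N ^ k - A) / real M ^ Suc i)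
      \<in> {1 / (4 * real M)..1 - 1 / (4 * real M)})"
    if g: "g \<in> G" and A: "\<bar>real_of_int A\<bar> \<le> R" for g A
  proof -
    have "12 * real M * \<bar>real_of_int A\<bar> \<le> real M ^ J"
      using A J Mr by (smt (verit) mult_left_mono)
    moreover have "\<bar>real_of_int g\<bar> * real M ^ (T * D) * \<bar>real N ^ k / real M ^ j - \<tau>\<bar>
        \<le> Gm * real M ^ (T * D) * \<eta>"
      using Gm[OF g] close Mr by (intro mult_mono) auto
    ultimately show ?thesis
      using exists_good_digit_positions[OF M _ MD _ _ _ _ j, of "ee g" g A "real N ^ k"] ee[OF g] eD[OF g]
        Gm1 Mr
      by (simp add: D_def \<tau>_def \<eta>_def)
  qed
  then show ?thesis by blast
qed

lemma exists_power_char_small: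
  fixes H F :: "int set"
  assumes P: "self_similar_measure M B \<nu>" and B: "finite B" "b0 \<in> B" "b1 \<in> B" "b0 < b1"
    and M: "M \<ge> 3" and N: "N \<ge> 2" and irr: "ln (real N) / ln (real M) \<notin> \<rat>"
    and H: "finite H" "0 \<notin> H" and F: "finite F"
  shows "\<exists>k. \<forall>h\<in>H. \<forall>f\<in>F.
    cmod (char \<nu> (2 * pi * (real_of_int h * real N ^ k - real_of_int f))) \<le> mask_bound M B ^ T"
proof -
  define \<delta> where "\<delta> = int (b1 - b0)"
  have "\<delta> > 0" using B by (simp add: \<delta>_def)
  define R where "R = (\<Sum>f\<in>F. \<bar>real_of_int (\<delta> * f)\<bar>)"
  have G: "finite ((*) \<delta> ` H)" "0 \<notin> (*) \<delta> ` H" using H \<open>\<delta> > 0\<close> by auto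
  obtain k where k: "\<forall>g\<in>(*) \<delta> ` H. \<forall>A::int. \<bar>real_of_int A\<bar> \<le> R \<longrightarrow>
      (\<exists>S. finite S \<and> card S = T \<and> (\<forall>i\<in>S. frac (real_of_int (g * int N ^ k - A) / real M ^ Suc i)
        \<in> {1 / (4 * real M)..1 - 1 / (4 * real M)}))"
    using exists_power_with_good_digits[OF M N irr G, of R T] by blast
  have "cmod (char \<nu> (2 * pi * (real_of_int h * real N ^ k - real_of_int f))) \<le> mask_bound M B ^ T"
    if h: "h \<in> H" and f: "f \<in> F" for h f
  proof -
    have "\<bar>real_of_int (\<delta> * f)\<bar> \<le> R"
      unfolding R_def using F f by (intro member_le_sum) auto
    then obtain S where S: "finite S" "card S = T" and good: "\<forall>i\<in>S.
        frac (real_of_int (\<delta> * h * int N ^ k - \<delta> * f) / real M ^ Suc i)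
          \<in> {1 / (4 * real M)..1 - 1 / (4 * real M)}"
      using k h by blast
    have eq: "real (b1 - b0) * ((real_of_int h * real N ^ k - real_of_int f) / real M ^ Suc i) =
        real_of_int (\<delta> * h * int N ^ k - \<delta> * f) / real M ^ Suc i" for i
      using B by (simp add: \<delta>_def algebra_simps of_nat_diff)
    have "cmod (char \<nu> (2 * pi * (real_of_int h * real N ^ k - real_of_int f))) \<le> mask_bound M B ^ card S"
      by (rule norm_char_le_mask_bound_pow[OF P B M S(1)]) (subst eq, use good in blast)
    then show ?thesis using S(2) by simp
  qed
  then show ?thesis by blast
qed

lemma exists_exponents_char_small:
  fixes H :: "int set"
  assumes P: "self_similar_measure M B \<nu>" and B: "finite B" "b0 \<in> B" "b1 \<in> B" "b0 < b1"
    and M: "M \<ge> 3" and N: "N \<ge> 2" and irr: "ln (real N) / ln (real M) \<notin> \<rat>"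
    and H: "finite H" "0 \<notin> H"
  shows "\<exists>\<kappa>::nat \<Rightarrow> nat. \<forall>j<n. \<forall>j'<n. j \<noteq> j' \<longrightarrow> (\<forall>h\<in>H. \<forall>h'\<in>H.
    cmod (char \<nu> (2 * pi * (real_of_int h * real N ^ \<kappa> j - real_of_int h' * real N ^ \<kappa> j')))
      \<le> mask_bound M B ^ T)"
proof (induction n)
  case (Suc n)
  then obtain \<kappa> :: "nat \<Rightarrow> nat" where IH: "\<forall>j<n. \<forall>j'<n. j \<noteq> j' \<longrightarrow> (\<forall>h\<in>H. \<forall>h'\<in>H.
      cmod (char \<nu> (2 * pi * (real_of_int h * real N ^ \<kappa> j - real_of_int h' * real N ^ \<kappa> j')))
        \<le> mask_bound M B ^ T)"
    by blast
  define F where "F = (\<lambda>(h', j'). h' * int N ^ \<kappa> j') ` (H \<times> {..<n})"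
  have "finite F" using H by (simp add: F_def)
  then obtain k where k: "\<forall>h\<in>H. \<forall>f\<in>F.
      cmod (char \<nu> (2 * pi * (real_of_int h * real N ^ k - real_of_int f))) \<le> mask_bound M B ^ T"
    using exists_power_char_small[OF P B M N irr H] by blast
  have new: "cmod (char \<nu> (2 * pi * (real_of_int h * real N ^ k - real_of_int h' * real N ^ \<kappa> j')))
      \<le> mask_bound M B ^ T" if "h \<in> H" "h' \<in> H" "j' < n" for h h' j'
    using k that unfolding F_def by force
  have "cmod (char \<nu> (2 * pi * (real_of_int h * real N ^ (\<kappa>(n := k)) j -
      real_of_int h' * real N ^ (\<kappa>(n := k)) j'))) \<le> mask_bound M B ^ T"
    if j: "j < Suc n" "j' < Suc n" "j \<noteq> j'" and h: "h \<in> H" "h' \<in> H" for j j' h h'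
  proof (cases "j = n \<or> j' = n")
    case True
    then consider "j = n" "j' < n" | "j' = n" "j < n" using j by fastforce
    then show ?thesis
    proof cases
      case 2
      have "char \<nu> (2 * pi * (real_of_int h * real N ^ \<kappa> j - real_of_int h' * real N ^ k)) =
          cnj (char \<nu> (2 * pi * (real_of_int h' * real N ^ k - real_of_int h * real N ^ \<kappa> j)))"
        by (subst char_uminus[symmetric]) (simp add: algebra_simps)
      then show ?thesis using new[OF h(2,1) 2(2)] 2 by simp
    qed (use new[OF h] in simp)
  next
    case False
    then show ?thesis using IH j h by simp
  qed
  then show ?case by blast
qed simp

section \<open>A trigonometric polynomial detecting the gaps of \<open>C\<^sub>N\<close>\<close>

definition off_diagonal :: "nat \<Rightarrow> (nat \<times> nat) set" where
  "off_diagonal L = {p \<in> {..L} \<times> {..L}. fst p \<noteq> snd p}"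

definition binom_weight :: "nat \<Rightarrow> nat \<times> nat \<Rightarrow> real" where
  "binom_weight L p = real (L choose fst p) * real (L choose snd p)"

definition index_gap :: "nat \<times> nat \<Rightarrow> int" where
  "index_gap p = int (fst p) - int (snd p)"

text \<open>Expanding \<open>|1 + e(u)|^(2L) = (1 + e(u))^L (1 + e(-u))^L\<close> by the binomial theorem.\<close>

lemma sum_binom_weight_iexp:
  "(\<Sum>p\<in>{..L}\<times>{..L}. complex_of_real (binom_weight L p) * iexp (2 * pi * real_of_int (index_gap p) * u))
     = complex_of_real ((2 + 2 * cos (2 * pi * u)) ^ L)"
proof -
  define X where "X = iexp (2 * pi * u)"
  define Y where "Y = iexp (- (2 * pi * u))"
  have XY: "X * Y = 1" by (simp add: X_def Y_def flip: exp_add)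
  have XpY: "X + Y = complex_of_real (2 * cos (2 * pi * u))"
  proof -
    have "X = cis (2 * pi * u)" "Y = cis (- (2 * pi * u))" by (simp_all add: X_def Y_def cis_conv_exp)
    then show ?thesis by (simp add: complex_eq_iff)
  qed
  have e: "iexp (2 * pi * real_of_int (index_gap p) * u) = X ^ fst p * Y ^ snd p" for p
  proof -
    have "iexp (2 * pi * real_of_int (index_gap p) * u) = exp (of_nat (fst p) * (\<i> * complex_of_real (2 * pi * u)) +
        of_nat (snd p) * (\<i> * complex_of_real (- (2 * pi * u))))"
      by (simp add: index_gap_def algebra_simps)
    then show ?thesis by (simp only: exp_add exp_of_nat_mult X_def Y_def)
  qed
  have "(\<Sum>p\<in>{..L}\<times>{..L}. complex_of_real (binom_weight L p) * iexp (2 * pi * real_of_int (index_gap p) * u))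
      = (\<Sum>a\<le>L. of_nat (L choose a) * X ^ a) * (\<Sum>b\<le>L. of_nat (L choose b) * Y ^ b)"
    unfolding sum.cartesian_product e sum_product by (intro sum.cong refl) (auto simp: binom_weight_def)
  also have "\<dots> = ((X + 1) * (Y + 1)) ^ L" by (simp add: binomial_ring power_mult_distrib)
  also have "(X + 1) * (Y + 1) = complex_of_real (2 + 2 * cos (2 * pi * u))"
    using XY XpY by (simp add: algebra_simps)
  finally show ?thesis by simp
qed

lemma sum_off_diagonal_iexp:
  "(\<Sum>p\<in>off_diagonal L. complex_of_real (binom_weight L p) * iexp (2 * pi * real_of_int (index_gap p) * u))
     = complex_of_real ((2 + 2 * cos (2 * pi * u)) ^ L - real ((2 * L) choose L))"
proof -
  define F where "F p = complex_of_real (binom_weight L p) * iexp (2 * pi * real_of_int (index_gap p) * u)" for p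
  have "(\<Sum>p\<in>{..L}\<times>{..L}. F p) =
      (\<Sum>p\<in>{..L}\<times>{..L}. if fst p \<noteq> snd p then F p else 0) + (\<Sum>p\<in>{..L}\<times>{..L}. if fst p = snd p then F p else 0)"
    by (subst sum.distrib[symmetric]) (intro sum.cong refl, auto)
  also have "(\<Sum>p\<in>{..L}\<times>{..L}. if fst p \<noteq> snd p then F p else 0) = (\<Sum>p\<in>off_diagonal L. F p)"
    unfolding off_diagonal_def by (rule sum.inter_filter[symmetric]) simp
  also have "(\<Sum>p\<in>{..L}\<times>{..L}. if fst p = snd p then F p else 0) =
      (\<Sum>a\<le>L. \<Sum>b\<le>L. if a = b then complex_of_real (real ((L choose a) ^ 2)) else 0)"
    unfolding sum.cartesian_product
    by (intro sum.cong refl) (auto simp: F_def index_gap_def binom_weight_def power2_eq_square)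
  also have "\<dots> = (\<Sum>a\<le>L. complex_of_real (real ((L choose a) ^ 2)))"
    by (simp add: sum.delta)
  also have "\<dots> = complex_of_real (real ((2 * L) choose L))"
    by (simp only: of_nat_sum[symmetric] of_real_of_nat_eq choose_square_sum)
  finally show ?thesis using sum_binom_weight_iexp[of L u] unfolding F_def by (simp add: algebra_simps)
qed

lemma central_binomial_lower_bound: "4 ^ L \<le> (2 * L + 1) * ((2 * L) choose L)"
proof -
  have "(4::nat) ^ L = (\<Sum>k\<le>2 * L. (2 * L) choose k)" by (simp add: power_mult choose_row_sum)
  also have "\<dots> \<le> (\<Sum>k\<le>2 * L. (2 * L) choose L)" by (intro sum_mono binomial_maximum')
  also have "\<dots> = (2 * L + 1) * ((2 * L) choose L)" by simp
  finally show ?thesis .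
qed

lemma exists_pow_less_central_binomial:
  fixes \<beta> :: real assumes "0 \<le> \<beta>" "\<beta> < 4"
  shows "\<exists>L. \<beta> ^ L < real ((2 * L) choose L)"
proof -
  define r where "r = \<beta> / 4"
  have r: "0 \<le> r" "r < 1" using assms by (auto simp: r_def)
  have "(\<lambda>n. 2 * (real n * r ^ n) + r ^ n) \<longlonglongrightarrow> 2 * 0 + 0"
    using r by (intro tendsto_intros powser_times_n_limit_0 LIMSEQ_power_zero) auto
  hence "(\<lambda>n. (2 * real n + 1) * r ^ n) \<longlonglongrightarrow> 0" by (simp add: algebra_simps)
  then obtain L where "\<bar>(2 * real L + 1) * r ^ L\<bar> < 1"
    using LIMSEQ_D[of _ 0 1] by fastforce
  hence L: "(2 * real L + 1) * r ^ L < 1" by linarith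
  have "\<beta> ^ L = r ^ L * 4 ^ L" by (simp add: r_def power_divide)
  also have "\<dots> \<le> r ^ L * ((2 * real L + 1) * real ((2 * L) choose L))"
  proof -
    have "real (4 ^ L) \<le> real ((2 * L + 1) * ((2 * L) choose L))"
      using central_binomial_lower_bound[of L] by (simp only: of_nat_le_iff)
    then show ?thesis using r by (intro mult_left_mono) (simp_all add: algebra_simps)
  qed
  also have "\<dots> < 1 * real ((2 * L) choose L)"
    using L by (subst mult.assoc[symmetric], intro mult_strict_right_mono) (auto simp: mult_ac)
  finally show ?thesis by auto
qed

definition trig_poly :: "'i set \<Rightarrow> ('i \<Rightarrow> complex) \<Rightarrow> ('i \<Rightarrow> real) \<Rightarrow> real \<Rightarrow> complex" where
  "trig_poly Q w \<xi> x = (\<Sum>u\<in>Q. w u * iexp (2 * pi * \<xi> u * x))"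

lemma norm_trig_poly_le: "cmod (trig_poly Q w \<xi> x) \<le> (\<Sum>u\<in>Q. cmod (w u))"
  unfolding trig_poly_def using norm_sum[of "\<lambda>u. w u * iexp (2 * pi * \<xi> u * x)" Q]
  by (simp add: norm_mult)

lemma norm_trig_poly_squared:
  assumes "finite Q"
  shows "complex_of_real ((cmod (trig_poly Q w \<xi> x))\<^sup>2) =
    (\<Sum>p\<in>Q \<times> Q. (w (fst p) * cnj (w (snd p))) * iexp (2 * pi * (\<xi> (fst p) - \<xi> (snd p)) * x))"
proof -
  have "complex_of_real ((cmod (trig_poly Q w \<xi> x))\<^sup>2) = trig_poly Q w \<xi> x * cnj (trig_poly Q w \<xi> x)"
    by (rule complex_norm_square)
  also have "\<dots> = (\<Sum>u\<in>Q. \<Sum>v\<in>Q. (w u * iexp (2 * pi * \<xi> u * x)) * cnj (w v * iexp (2 * pi * \<xi> v * x)))"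
    by (simp add: trig_poly_def sum_product cnj_sum)
  also have "\<dots> = (\<Sum>u\<in>Q. \<Sum>v\<in>Q. (w u * cnj (w v)) * iexp (2 * pi * (\<xi> u - \<xi> v) * x))"
    by (intro sum.cong refl) (simp add: exp_cnj algebra_simps flip: exp_add)
  finally show ?thesis by (simp add: sum.cartesian_product case_prod_beta)
qed

lemma integral_norm_trig_poly_squared_le:
  assumes \<nu>: "prob_space \<nu>" "sets \<nu> = sets borel" and Q: "finite Q"
  shows "(\<integral>x. (cmod (trig_poly Q w \<xi> x))\<^sup>2 \<partial>\<nu>) \<le>
    (\<Sum>p\<in>Q \<times> Q. cmod (w (fst p)) * cmod (w (snd p)) * cmod (char \<nu> (2 * pi * (\<xi> (fst p) - \<xi> (snd p)))))"
proof -
  interpret prob_space \<nu> by fact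
  let ?I = "\<integral>x. (cmod (trig_poly Q w \<xi> x))\<^sup>2 \<partial>\<nu>"
  have int: "integrable \<nu> (\<lambda>x. c * iexp (2 * pi * f * x))" for c f
    by (rule integrable_const_bound[where B="cmod c"]) (auto simp: norm_mult measurable_cong_sets[OF \<nu>(2) refl])
  have "complex_of_real ?I = (CLINT x|\<nu>. complex_of_real ((cmod (trig_poly Q w \<xi> x))\<^sup>2))"
    by (rule integral_complex_of_real[symmetric])
  also have "\<dots> = (\<Sum>p\<in>Q \<times> Q. (w (fst p) * cnj (w (snd p))) * char \<nu> (2 * pi * (\<xi> (fst p) - \<xi> (snd p))))"
    unfolding norm_trig_poly_squared[OF Q]
    by (subst Bochner_Integration.integral_sum[OF int]) (simp add: char_def mult.assoc)
  finally have eq: "complex_of_real ?I = \<dots>" .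
  have "?I = cmod (complex_of_real ?I)" by simp
  also have "\<dots> \<le> (\<Sum>p\<in>Q \<times> Q. cmod ((w (fst p) * cnj (w (snd p))) * char \<nu> (2 * pi * (\<xi> (fst p) - \<xi> (snd p)))))"
    unfolding eq by (rule norm_sum)
  finally show ?thesis by (simp add: norm_mult)
qed

lemma measure_le_integral_norm_trig_poly_squared:
  assumes \<nu>: "prob_space \<nu>" "sets \<nu> = sets borel" and Z: "Z \<in> sets borel"
    and low: "\<And>x. x \<in> Z \<Longrightarrow> \<eta> \<le> cmod (trig_poly Q w \<xi> x)" and \<eta>: "\<eta> \<ge> 0"
  shows "\<eta>\<^sup>2 * measure \<nu> Z \<le> (\<integral>x. (cmod (trig_poly Q w \<xi> x))\<^sup>2 \<partial>\<nu>)"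
proof -
  interpret prob_space \<nu> by fact
  have Zs: "Z \<in> sets \<nu>" using Z \<nu>(2) by simp
  have "(cmod (trig_poly Q w \<xi> x))\<^sup>2 \<le> (\<Sum>u\<in>Q. cmod (w u))\<^sup>2" for x
    using norm_trig_poly_le by (intro power_mono) auto
  moreover have "(\<lambda>x. (cmod (trig_poly Q w \<xi> x))\<^sup>2) \<in> borel_measurable \<nu>"
    by (simp add: measurable_cong_sets[OF \<nu>(2) refl] trig_poly_def)
  ultimately have "integrable \<nu> (\<lambda>x. (cmod (trig_poly Q w \<xi> x))\<^sup>2)"
    by (intro integrable_const_bound[where B="(\<Sum>u\<in>Q. cmod (w u))\<^sup>2"]) auto
  moreover have "integrable \<nu> (\<lambda>x. \<eta>\<^sup>2 * indicator Z x)"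
    using Zs by (intro integrable_mult_right integrable_real_indicator) (auto simp: emeasure_eq_measure)
  moreover have "\<eta>\<^sup>2 * indicator Z x \<le> (cmod (trig_poly Q w \<xi> x))\<^sup>2" for x
    using low[of x] \<eta> by (auto simp: indicator_def intro: power_mono)
  ultimately have "(\<integral>x. \<eta>\<^sup>2 * indicator Z x \<partial>\<nu>) \<le> (\<integral>x. (cmod (trig_poly Q w \<xi> x))\<^sup>2 \<partial>\<nu>)"
    by (intro integral_mono)
  then show ?thesis using Zs by simp
qed

text \<open>The Gram-type sum of a block-structured family is controlled by the diagonal blocks,
  which carry only the fraction \<open>1/n\<close> of the total weight, plus \<open>\<delta>\<close> times everything else.\<close>

lemma sum_block_weights_le:
  fixes b :: "'p \<Rightarrow> real" and K :: "nat \<times> 'p \<Rightarrow> nat \<times> 'p \<Rightarrow> real"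
  assumes P: "finite P" and b: "\<And>p. b p \<ge> 0" and n: "n > 0"
    and K: "\<And>u v. u \<in> {..<n} \<times> P \<Longrightarrow> v \<in> {..<n} \<times> P \<Longrightarrow> K u v \<le> (if fst u = fst v then 1 else 0) + \<delta>"
  shows "(\<Sum>p\<in>({..<n} \<times> P) \<times> ({..<n} \<times> P). b (snd (fst p)) / n * (b (snd (snd p)) / n) * K (fst p) (snd p))
    \<le> (\<Sum>p\<in>P. b p)\<^sup>2 / n + \<delta> * (\<Sum>p\<in>P. b p)\<^sup>2"
proof -
  define Q where "Q = {..<n} \<times> P"
  define W where "W = (\<Sum>p\<in>P. b p)"
  define c where "c u = b (snd u) / real n" for u :: "nat \<times> 'p"
  have c0: "c u \<ge> 0" for u using b by (simp add: c_def)
  have sumc: "(\<Sum>u\<in>Q. c u) = W"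
    using n by (simp add: Q_def c_def W_def sum.cartesian_product' sum_divide_distrib[symmetric])
  have diag: "(\<Sum>v\<in>Q. c v * (if fst u = fst v then 1 else 0)) = W / real n" if "u \<in> Q" for u
  proof -
    have "(\<Sum>v\<in>Q. c v * (if fst u = fst v then 1 else 0)) = (\<Sum>j<n. if fst u = j then W / real n else 0)"
      unfolding Q_def c_def W_def sum.cartesian_product'
      by (intro sum.cong refl) (simp add: sum_divide_distrib)
    moreover have "fst u < n" using that by (auto simp: Q_def)
    ultimately show ?thesis by simp
  qed
  have "(\<Sum>p\<in>Q \<times> Q. c (fst p) * c (snd p) * K (fst p) (snd p))
      \<le> (\<Sum>p\<in>Q \<times> Q. c (fst p) * c (snd p) * ((if fst (fst p) = fst (snd p) then 1 else 0) + \<delta>))"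
  proof (intro sum_mono mult_left_mono)
    fix p assume "p \<in> Q \<times> Q"
    then show "K (fst p) (snd p) \<le> (if fst (fst p) = fst (snd p) then 1 else 0) + \<delta>"
      by (intro K) (auto simp: Q_def)
  qed (use c0 in simp)
  also have "\<dots> = (\<Sum>u\<in>Q. c u * (\<Sum>v\<in>Q. c v * (if fst u = fst v then 1 else 0))) + \<delta> * (\<Sum>u\<in>Q. c u)\<^sup>2"
    by (simp add: sum.cartesian_product' algebra_simps sum.distrib sum_distrib_left sum_distrib_right
        power2_eq_square)
  also have "(\<Sum>u\<in>Q. c u * (\<Sum>v\<in>Q. c v * (if fst u = fst v then 1 else 0))) = (\<Sum>u\<in>Q. c u * (W / real n))"
    by (rule sum.cong[OF refl]) (simp add: diag)
  also have "\<dots> = W\<^sup>2 / real n"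
    by (simp only: sum_distrib_right[symmetric] sumc power2_eq_square) simp
  finally show ?thesis by (simp add: Q_def W_def c_def sumc[unfolded Q_def W_def c_def])
qed

text \<open>The trigonometric polynomial
  \<open>(1/n) \<Sum>\<^sub>j<\<^sub>n ((2 + 2 cos 2\<pi>(\<xi>\<^sub>j x - y))^L - C(2L,L))\<close>, written out in frequencies \<open>h \<xi>\<^sub>j\<close>
  with \<open>0 < |h| \<le> L\<close>.\<close>

definition gap_detector :: "nat \<Rightarrow> nat \<Rightarrow> (nat \<Rightarrow> real) \<Rightarrow> real \<Rightarrow> real \<Rightarrow> complex" where
  "gap_detector L n \<xi> y = trig_poly ({..<n} \<times> off_diagonal L)
     (\<lambda>u. complex_of_real (binom_weight L (snd u) / real n) * iexp (- (2 * pi * real_of_int (index_gap (snd u)) * y)))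
     (\<lambda>u. real_of_int (index_gap (snd u)) * \<xi> (fst u))"

lemma gap_detector_eq:
  "gap_detector L n \<xi> y x =
    complex_of_real ((\<Sum>j<n. (2 + 2 * cos (2 * pi * (\<xi> j * x - y))) ^ L - real ((2 * L) choose L)) / real n)"
proof -
  have summand: "complex_of_real (binom_weight L p / real n) * iexp (- (2 * pi * real_of_int (index_gap p) * y)) *
      iexp (2 * pi * (real_of_int (index_gap p) * \<xi> j) * x) =
      complex_of_real (binom_weight L p) * iexp (2 * pi * real_of_int (index_gap p) * (\<xi> j * x - y)) / real n"
    for p j
  proof -
    have "iexp (- (2 * pi * real_of_int (index_gap p) * y)) * iexp (2 * pi * (real_of_int (index_gap p) * \<xi> j) * x)
        = iexp (2 * pi * real_of_int (index_gap p) * (\<xi> j * x - y))"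
      by (simp add: algebra_simps flip: exp_add)
    then show ?thesis by (simp add: field_simps)
  qed
  have "gap_detector L n \<xi> y x = (\<Sum>j<n. (\<Sum>p\<in>off_diagonal L. complex_of_real (binom_weight L p) *
      iexp (2 * pi * real_of_int (index_gap p) * (\<xi> j * x - y))) / real n)"
    unfolding gap_detector_def trig_poly_def sum.cartesian_product' sum_divide_distrib
    by (intro sum.cong refl) (simp only: prod.sel summand)
  also have "\<dots> = (\<Sum>j<n. complex_of_real ((2 + 2 * cos (2 * pi * (\<xi> j * x - y))) ^ L - real ((2 * L) choose L)) / real n)"
    by (simp only: sum_off_diagonal_iexp)
  finally show ?thesis by (simp add: sum_divide_distrib)
qed

lemma norm_gap_detector_ge:
  assumes n: "n > 0" and a: "0 \<le> a" "a \<le> 1/2"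
    and window: "\<And>j. j < n \<Longrightarrow> frac (\<xi> j * x - y) \<in> {a..1 - a}"
  shows "real ((2 * L) choose L) - (2 + 2 * cos (2 * pi * a)) ^ L \<le> cmod (gap_detector L n \<xi> y x)"
proof -
  define \<eta> where "\<eta> = real ((2 * L) choose L) - (2 + 2 * cos (2 * pi * a)) ^ L"
  have "(2 + 2 * cos (2 * pi * (\<xi> j * x - y))) ^ L \<le> (2 + 2 * cos (2 * pi * a)) ^ L" if "j < n" for j
  proof (rule power_mono)
    show "2 + 2 * cos (2 * pi * (\<xi> j * x - y)) \<le> 2 + 2 * cos (2 * pi * a)"
      using cos_2pi_le_of_frac_mem[OF a window[OF that]] by simp
    show "0 \<le> 2 + 2 * cos (2 * pi * (\<xi> j * x - y))"
      using cos_ge_minus_one[of "2 * pi * (\<xi> j * x - y)"] by linarith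
  qed
  then have "(\<Sum>j<n. (2 + 2 * cos (2 * pi * (\<xi> j * x - y))) ^ L - real ((2 * L) choose L)) \<le> (\<Sum>j<n. - \<eta>)"
    by (intro sum_mono) (simp add: \<eta>_def)
  then have "(\<Sum>j<n. (2 + 2 * cos (2 * pi * (\<xi> j * x - y))) ^ L - real ((2 * L) choose L)) / real n \<le> - \<eta>"
    using n by (simp add: divide_le_eq mult.commute)
  then have "\<eta> \<le> \<bar>(\<Sum>j<n. (2 + 2 * cos (2 * pi * (\<xi> j * x - y))) ^ L - real ((2 * L) choose L)) / real n\<bar>"
    by linarith
  then show ?thesis unfolding gap_detector_eq norm_of_real \<eta>_def .
qed

lemma integral_norm_gap_detector_le:
  fixes \<nu> :: "real measure"
  assumes \<nu>: "prob_space \<nu>" "sets \<nu> = sets borel" and n: "n > 0" and \<delta>: "0 \<le> \<delta>"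
    and decay: "\<And>j j' h h'. j < n \<Longrightarrow> j' < n \<Longrightarrow> j \<noteq> j' \<Longrightarrow>
      h \<noteq> 0 \<Longrightarrow> \<bar>h\<bar> \<le> int L \<Longrightarrow> h' \<noteq> 0 \<Longrightarrow> \<bar>h'\<bar> \<le> int L \<Longrightarrow>
      cmod (char \<nu> (2 * pi * (real_of_int h * \<xi> j - real_of_int h' * \<xi> j'))) \<le> \<delta>"
  shows "(\<integral>x. (cmod (gap_detector L n \<xi> y x))\<^sup>2 \<partial>\<nu>) \<le>
    (\<Sum>p\<in>off_diagonal L. binom_weight L p)\<^sup>2 / real n + \<delta> * (\<Sum>p\<in>off_diagonal L. binom_weight L p)\<^sup>2"
proof -
  define Q where "Q = {..<n} \<times> off_diagonal L"
  define w where "w u = complex_of_real (binom_weight L (snd u) / real n) *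
    iexp (- (2 * pi * real_of_int (index_gap (snd u)) * y))" for u :: "nat \<times> nat \<times> nat"
  define fr where "fr u = real_of_int (index_gap (snd u)) * \<xi> (fst u)" for u :: "nat \<times> nat \<times> nat"
  have "real_distribution \<nu>" using \<nu> by (simp add: real_distribution_def real_distribution_axioms_def)
  have norm_w: "cmod (w u) = binom_weight L (snd u) / real n" for u
  proof -
    have "cmod (w u) = \<bar>binom_weight L (snd u) / real n\<bar>"
      unfolding w_def norm_mult norm_of_real by simp
    then show ?thesis by (simp add: binom_weight_def)
  qed
  have K: "cmod (char \<nu> (2 * pi * (fr u - fr v))) \<le> (if fst u = fst v then 1 else 0) + \<delta>"
    if "u \<in> Q" "v \<in> Q" for u v
  proof (cases "fst u = fst v")
    case True
    then show ?thesis
      using real_distribution.cmod_char_le_1[OF \<open>real_distribution \<nu>\<close>] \<delta> by (simp add: add_increasing2)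
  next
    case False
    then show ?thesis
      using decay[of "fst u" "fst v" "index_gap (snd u)" "index_gap (snd v)"] that
      by (auto simp: Q_def fr_def off_diagonal_def index_gap_def)
  qed
  have "(\<integral>x. (cmod (gap_detector L n \<xi> y x))\<^sup>2 \<partial>\<nu>) \<le>
      (\<Sum>p\<in>Q \<times> Q. cmod (w (fst p)) * cmod (w (snd p)) * cmod (char \<nu> (2 * pi * (fr (fst p) - fr (snd p)))))"
    unfolding gap_detector_def Q_def[symmetric] w_def[symmetric] fr_def[symmetric]
    by (rule integral_norm_trig_poly_squared_le[OF \<nu>]) (simp add: Q_def off_diagonal_def)
  also have "\<dots> \<le> (\<Sum>p\<in>off_diagonal L. binom_weight L p)\<^sup>2 / real n + \<delta> * (\<Sum>p\<in>off_diagonal L. binom_weight L p)\<^sup>2"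
    unfolding norm_w Q_def
    by (rule sum_block_weights_le) (use n K in \<open>auto simp: binom_weight_def off_diagonal_def Q_def\<close>)
  finally show ?thesis .
qed

text \<open>The core estimate: the polynomial is at least \<open>\<eta>\<close> in modulus on \<open>Z\<close>, while its \<open>L\<^sup>2(\<nu>)\<close> norm
  only sees the Fourier transform of \<open>\<nu>\<close> at differences of its frequencies.\<close>

lemma measure_le_of_frac_window:
  fixes \<nu> :: "real measure" and \<xi> :: "nat \<Rightarrow> real" and a :: real and L :: nat
  defines "\<eta> \<equiv> real ((2 * L) choose L) - (2 + 2 * cos (2 * pi * a)) ^ L"
    and "W \<equiv> (\<Sum>p\<in>off_diagonal L. binom_weight L p)"
  assumes \<nu>: "prob_space \<nu>" "sets \<nu> = sets borel" and Z: "Z \<in> sets borel" and n: "n > 0"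
    and a: "0 \<le> a" "a \<le> 1/2" and \<eta>: "0 \<le> \<eta>" and \<delta>: "0 \<le> \<delta>"
    and window: "\<And>x j. x \<in> Z \<Longrightarrow> j < n \<Longrightarrow> frac (\<xi> j * x - y) \<in> {a..1 - a}"
    and decay: "\<And>j j' h h'. j < n \<Longrightarrow> j' < n \<Longrightarrow> j \<noteq> j' \<Longrightarrow>
      h \<noteq> 0 \<Longrightarrow> \<bar>h\<bar> \<le> int L \<Longrightarrow> h' \<noteq> 0 \<Longrightarrow> \<bar>h'\<bar> \<le> int L \<Longrightarrow>
      cmod (char \<nu> (2 * pi * (real_of_int h * \<xi> j - real_of_int h' * \<xi> j'))) \<le> \<delta>"
  shows "\<eta>\<^sup>2 * measure \<nu> Z \<le> W\<^sup>2 / real n + \<delta> * W\<^sup>2"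
proof -
  have "\<eta>\<^sup>2 * measure \<nu> Z \<le> (\<integral>x. (cmod (gap_detector L n \<xi> y x))\<^sup>2 \<partial>\<nu>)"
    unfolding gap_detector_def
    by (rule measure_le_integral_norm_trig_poly_squared[OF \<nu> Z _ \<eta>])
      (use norm_gap_detector_ge[OF n a window] in \<open>simp add: \<eta>_def gap_detector_def\<close>)
  also have "\<dots> \<le> W\<^sup>2 / real n + \<delta> * W\<^sup>2"
    unfolding W_def by (rule integral_norm_gap_detector_le[OF \<nu> n \<delta> decay])
  finally show ?thesis .
qed

lemma cantor_set_mult_power:
  assumes C: "cantor_data N C" and x: "x \<in> cantor_set N C"
  shows "\<exists>y\<in>cantor_set N C. \<exists>m::int. real N ^ k * x = y + real_of_int m"
proof (induction k)
  case 0
  then show ?case using x by (intro bexI[of _ x] exI[of _ 0]) auto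
next
  case (Suc k)
  then obtain y m where y: "y \<in> cantor_set N C" and m: "real N ^ k * x = y + real_of_int m" by blast
  obtain d y' where "d \<in> C" "y' \<in> cantor_set N C" "y = cmap N d y'"
    using cantor_set_self_similar[OF C y] by blast
  moreover have "N > 0" using cantor_dataD(1)[OF C] by simp
  moreover have "real N ^ Suc k * x = real N * (y + real_of_int m)" using m by simp
  ultimately have "real N ^ Suc k * x = y' + real_of_int (int d + int N * m)"
    by (simp add: cmap_def field_simps)
  then show ?case using \<open>y' \<in> cantor_set N C\<close> by blast
qed

text \<open>\<open>(2 j0 + 1)/(2N)\<close> is the centre of the gap \<open>[j0/N, (j0+1)/N]\<close> left by the missing digit \<open>j0\<close>.\<close>

lemma frac_mem_window_of_mem_cantor_set:
  assumes C: "cantor_data N C" and j0: "j0 < N" "j0 \<notin> C" and x: "x \<in> cantor_set N C"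
  shows "frac (real N ^ k * x - (2 * real j0 + 1) / (2 * real N)) \<in> {1 / (2 * real N)..1 - 1 / (2 * real N)}"
proof -
  define c where "c = (2 * real j0 + 1) / (2 * real N)"
  define a where "a = 1 / (2 * real N)"
  have N: "real N \<ge> 3" using cantor_dataD(1)[OF C] by simp
  obtain y m where y: "y \<in> cantor_set N C" and m: "real N ^ k * x = y + real_of_int m"
    using cantor_set_mult_power[OF C x] by blast
  obtain d y' where d: "d \<in> C" and y': "y' \<in> cantor_set N C" and yy: "y = (y' + real d) / real N"
    using cantor_set_self_similar[OF C y] by (auto simp: cmap_def)
  have y'01: "0 \<le> y'" "y' \<le> 1" and y01: "0 \<le> y" "y \<le> 1"
    using y y' cantor_set_subset_unit_interval[OF C] by auto
  have "d \<noteq> j0" using d j0 by auto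
  then consider "real d + 1 \<le> real j0" | "real j0 + 1 \<le> real d" by linarith
  hence "a \<le> \<bar>y - c\<bar>"
  proof cases
    case 1
    hence "y \<le> real j0 / real N" using yy y'01 N by (simp add: divide_right_mono)
    then show ?thesis using N by (simp add: c_def a_def field_simps)
  next
    case 2
    hence "(real j0 + 1) / real N \<le> y" using yy y'01 N by (simp add: divide_right_mono)
    then show ?thesis using N by (simp add: c_def a_def field_simps)
  qed
  moreover have "a \<le> c" unfolding a_def c_def using N by (intro divide_right_mono) auto
  moreover have "c \<le> (2 * real N - 1) / (2 * real N)"
    unfolding c_def using j0 N by (intro divide_right_mono) auto
  hence "c \<le> 1 - a" using N by (simp add: a_def diff_divide_distrib)
  ultimately have "frac (y - c) \<in> {a..1 - a}"
    using y01 N by (intro frac_mem_window_of_abs) (auto simp: a_def)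
  moreover have "real N ^ k * x - c = (y - c) + real_of_int m" using m by simp
  ultimately have "frac (real N ^ k * x - c) \<in> {a..1 - a}" by (simp only: frac_add_of_int_right)
  then show ?thesis by (simp only: a_def c_def)
qed

lemma exists_two_digits:
  fixes B :: "nat set"
  assumes "finite B" "card B \<ge> 2" obtains b0 b1 where "b0 \<in> B" "b1 \<in> B" "b0 < b1"
proof -
  have "\<not> card B \<le> Suc 0" using assms(2) by simp
  then obtain x y where "x \<in> B" "y \<in> B" "x \<noteq> y"
    using card_le_Suc0_iff_eq[OF assms(1)] by blast
  then show ?thesis
  proof (cases "x < y")
    case False
    with \<open>x \<noteq> y\<close> have "y < x" by linarith
    then show ?thesis by (rule that[OF \<open>y \<in> B\<close> \<open>x \<in> B\<close>])
  qed (rule that)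
qed

lemma exists_missing_digit:
  assumes "cantor_data N C" obtains j0 where "j0 < N" "j0 \<notin> C"
proof -
  have "\<not> {0..<N} \<subseteq> C"
  proof
    assume "{0..<N} \<subseteq> C"
    hence "card {0..<N} \<le> card C" using cantor_dataD[OF assms] by (intro card_mono) auto
    then show False using cantor_dataD[OF assms] by simp
  qed
  then obtain j0 where "j0 \<in> {0..<N}" "j0 \<notin> C" by blast
  then show ?thesis by (intro that) auto
qed

lemma exists_kernel_degree:
  assumes a: "0 < a" "a \<le> 1/2" shows "\<exists>L. (2 + 2 * cos (2 * pi * a)) ^ L < real ((2 * L) choose L)"
proof -
  have "cos (2 * pi * a) < cos 0" by (rule cos_monotone_0_pi) (use a in auto)
  moreover have "-1 \<le> cos (2 * pi * a)" by (rule cos_ge_minus_one)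
  ultimately have "0 \<le> 2 + 2 * cos (2 * pi * a)" "2 + 2 * cos (2 * pi * a) < 4"
    unfolding cos_zero by linarith+
  then show ?thesis by (rule exists_pow_less_central_binomial)
qed

lemma measure_cantor_set_le:
  assumes B: "cantor_data M B" and C: "cantor_data N C" and ind: "mult_independent (int M) (int N)"
    and L: "(2 + 2 * cos (2 * pi * (1 / (2 * real N)))) ^ L \<le> real ((2 * L) choose L)"
  shows "(real ((2 * L) choose L) - (2 + 2 * cos (2 * pi * (1 / (2 * real N)))) ^ L)\<^sup>2 *
      measure (cantor_measure M B) (cantor_set N C) \<le>
    (\<Sum>p\<in>off_diagonal L. binom_weight L p)\<^sup>2 / real (Suc n) +
      mask_bound M B ^ n * (\<Sum>p\<in>off_diagonal L. binom_weight L p)\<^sup>2"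
proof -
  have P: "self_similar_measure M B (cantor_measure M B)" by (rule self_similar_cantor_measure[OF B])
  then have \<nu>: "prob_space (cantor_measure M B)" "sets (cantor_measure M B) = sets borel"
    by (simp_all add: self_similar_measure_def)
  note M = cantor_dataD(1)[OF B] and N = cantor_dataD(1)[OF C]
  have irr: "ln (real N) / ln (real M) \<notin> \<rat>" using ln_ratio_irrational[OF ind] M N by simp
  obtain b0 b1 where b: "b0 \<in> B" "b1 \<in> B" "b0 < b1"
    using exists_two_digits cantor_dataD(3,5)[OF B] by metis
  obtain j0 where j0: "j0 < N" "j0 \<notin> C" using exists_missing_digit[OF C] .
  define H where "H = {h::int. h \<noteq> 0 \<and> \<bar>h\<bar> \<le> int L}"
  have "finite H" unfolding H_def by (rule finite_subset[of _ "{- int L..int L}"]) auto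
  then have H: "finite H" "0 \<notin> H" by (simp_all add: H_def)
  obtain \<kappa> :: "nat \<Rightarrow> nat" where \<kappa>: "\<forall>j<Suc n. \<forall>j'<Suc n. j \<noteq> j' \<longrightarrow> (\<forall>h\<in>H. \<forall>h'\<in>H.
    cmod (char (cantor_measure M B) (2 * pi * (real_of_int h * real N ^ \<kappa> j - real_of_int h' * real N ^ \<kappa> j')))
      \<le> mask_bound M B ^ n)"
    using exists_exponents_char_small[OF P cantor_dataD(3)[OF B] b M _ irr H, of "Suc n" n] N by auto
  show ?thesis
  proof (rule measure_le_of_frac_window[OF \<nu> _ _ _ _ _ _ frac_mem_window_of_mem_cantor_set[OF C j0]])
    show "cantor_set N C \<in> sets borel" by (intro borel_closed compact_imp_closed compact_cantor_set[OF C])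
    show "0 \<le> mask_bound M B ^ n" using mask_bound_bounds[OF M cantor_dataD(5)[OF B]] by simp
    show "cmod (char (cantor_measure M B) (2 * pi * (real_of_int h * real N ^ \<kappa> j - real_of_int h' * real N ^ \<kappa> j')))
        \<le> mask_bound M B ^ n"
      if "j < Suc n" "j' < Suc n" "j \<noteq> j'" "h \<noteq> 0" "\<bar>h\<bar> \<le> int L" "h' \<noteq> 0" "\<bar>h'\<bar> \<le> int L"
      for j j' h h'
      using \<kappa> that by (simp add: H_def)
  qed (use L N in simp_all)
qed

lemma measure_cantor_set_eq_0:
  assumes B: "cantor_data M B" and C: "cantor_data N C" and ind: "mult_independent (int M) (int N)"
  shows "measure (cantor_measure M B) (cantor_set N C) = 0"
proof -
  define a where "a = 1 / (2 * real N)"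
  have "0 < a" "a \<le> 1/2" using cantor_dataD(1)[OF C] by (auto simp: a_def)
  then obtain L where L: "(2 + 2 * cos (2 * pi * a)) ^ L < real ((2 * L) choose L)"
    using exists_kernel_degree by blast
  define \<eta> where "\<eta> = real ((2 * L) choose L) - (2 + 2 * cos (2 * pi * a)) ^ L"
  define W where "W = (\<Sum>p\<in>off_diagonal L. binom_weight L p)"
  define \<rho> where "\<rho> = mask_bound M B"
  have \<rho>: "0 \<le> \<rho>" "\<rho> < 1"
    using mask_bound_bounds[OF cantor_dataD(1,5)[OF B]] by (simp_all add: \<rho>_def)
  have bound: "\<eta>\<^sup>2 * measure (cantor_measure M B) (cantor_set N C) \<le> W\<^sup>2 / real (Suc n) + \<rho> ^ n * W\<^sup>2" for n
    using measure_cantor_set_le[OF B C ind, of L n] L unfolding \<eta>_def W_def \<rho>_def a_def by simp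
  have "(\<lambda>n. W\<^sup>2 / real (Suc n) + \<rho> ^ n * W\<^sup>2) \<longlonglongrightarrow> 0 + 0 * W\<^sup>2"
    using \<rho> by (intro tendsto_add tendsto_mult_right LIMSEQ_power_zero LIMSEQ_Suc[OF lim_const_over_n]) auto
  then have "\<eta>\<^sup>2 * measure (cantor_measure M B) (cantor_set N C) \<le> 0 + 0 * W\<^sup>2"
    by (rule LIMSEQ_le_const) (use bound in blast)
  moreover have "\<eta>\<^sup>2 > 0" using L by (simp add: \<eta>_def)
  ultimately have "measure (cantor_measure M B) (cantor_set N C) \<le> 0" by (simp add: mult_le_0_iff)
  then show ?thesis using measure_nonneg[of "cantor_measure M B" "cantor_set N C"] by linarith
qed

theorem theorem2p4:
  fixes M N :: nat and B C :: "nat set"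
  assumes "cantor_data M B" and "cantor_data N C"
    and "mult_independent (int M) (int N)"
  shows "measure (cantor_measure M B) (cantor_set M B \<inter> cantor_set N C) = 0 \<and>
         measure (cantor_measure N C) (cantor_set M B \<inter> cantor_set N C) = 0"
proof -
  have null_subset: "measure \<mu> S = 0"
    if "self_similar_measure K D \<mu>" "cantor_data N' C'" "S \<subseteq> cantor_set N' C'"
      "measure \<mu> (cantor_set N' C') = 0"
    for \<mu> K D N' C' S
  proof -
    interpret prob_space \<mu> using that(1) by (simp add: self_similar_measure_def)
    have "cantor_set N' C' \<in> sets \<mu>"
      using that(1) compact_cantor_set[OF that(2)] by (simp add: self_similar_measure_def borel_closed compact_imp_closed)
    then have "measure \<mu> S \<le> 0" using finite_measure_mono[OF that(3)] that(4) by simp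
    then show ?thesis using measure_nonneg[of \<mu> S] by linarith
  qed
  have "mult_independent (int N) (int M)"
    using assms(3) unfolding mult_independent_def mult_dependent_def by metis
  then show ?thesis
    using null_subset[OF self_similar_cantor_measure[OF assms(1)] assms(2) _ measure_cantor_set_eq_0[OF assms]]
      null_subset[OF self_similar_cantor_measure[OF assms(2)] assms(1) _ measure_cantor_set_eq_0[OF assms(2,1)]]
    by simp
qed

end
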